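(* Let $k\ge 1$ and, for $t\ge 2$, let $\mathcal{G}_t^{gr}$ be the Grassmann algebra $\langle 1,e_1,\dots,e_t\mid e_ie_j=-e_je_i\rangle$ with the grading whose even (odd) part is spanned by monomials in the $e_i$ of even (odd) length. Then: (1) $c_n^{gr,z}(\mathcal{G}_{2k}^{gr})=c_n^{gr,z}(\mathcal{G}_{2k+1}^{gr})=\sum_{1\le i\le 2k,\ i\text{ odd}}\binom{n}{i}$; (2) $\delta_n^{gr}(\mathcal{G}_{2k}^{gr})=\sum_{0\le i\le 2k,\ i\text{ even}}\binom{n}{i}$ and $\delta_n^{gr}(\mathcal{G}_{2k+1}^{gr})=\binom{n}{2k+1}+\delta_n^{gr}(\mathcal{G}_{2k}^{gr})$; (3) $\chi_n^{gr,z}(\mathcal{G}_{2k}^{gr})=\chi_n^{gr,z}(\mathcal{G}_{2k+1}^{gr})=\sum_{1\le i\le 2k,\ i\text{ odd}}\chi_{(n-i),(1^i)}$; (4) $\chi_n(\Delta^{gr}(\mathcal{G}_{2k}^{gr}))=\sum_{0\le i\le 2k,\ i\text{ even}}\chi_{(n-i),(1^i)}$ and $\chi_n(\Delta^{gr}(\mathcal{G}_{2k+1}^{gr}))=\chi_{(n-2k-1),(1^{2k+1})}+\sum_{0\le i\le 2k,\ i\text{ even}}\chi_{(n-i),(1^i)}$.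
   Context: $F$ is a field of characteristic zero. A superalgebra is an algebra $A=A_0\oplus A_1$ with $A_iA_j\subseteq A_{i+j\bmod 2}$; $Z(A)$ is the center. $F\langle Y,Z\rangle$ is the free algebra on even variables $y_1,y_2,\dots$ and odd variables $z_1,z_2,\dots$. $\mathrm{Id}^{gr}(A)$ is the set of graded identities; $C^{gr}(A)$ is the set of central graded polynomials (zero constant term, all evaluations with even variables in $A_0$ and odd in $A_1$ lie in $Z(A)$). $P_n^{gr}$ is the span of monomials $w_{\sigma(1)}\cdots w_{\sigma(n)}$, $\sigma\in S_n$, $w_i\in\{y_i,z_i\}$; $c_n^{gr,z}(A)=\dim P_n^{gr}/(P_n^{gr}\cap C^{gr}(A))$, $\delta_n^{gr}(A)=\dim(P_n^{gr}\cap C^{gr}(A))/(P_n^{gr}\cap\mathrm{Id}^{gr}(A))$. $\mathbb{Z}_2\wr S_n$ acts on $P_n^{gr}$ by $(a_1,\dots,a_n;\sigma)y_i=y_{\sigma(i)}$, $(a_1,\dots,a_n;\sigma)z_i=a_{\sigma(i)}z_{\sigma(i)}$ ($a_j=\pm1$); $\chi_n^{gr,z}(A)$ and $\chi_n(\Delta^{gr}(A))$ denote the characters of $P_n^{gr}/(P_n^{gr}\cap C^{gr}(A))$ and $(P_n^{gr}\cap C^{gr}(A))/(P_n^{gr}\cap\mathrm{Id}^{gr}(A))$. $\chi_{\lambda,\mu}$ is the irreducible $\mathbb{Z}_2\wr S_n$-character indexed by $\lambda\vdash n-r$ (even variables) and $\mu\vdash r$ (odd variables); $1^i$ denotes the partition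 with $i$ parts equal to $1$. *)

theory Defs
  imports Complex_Main "HOL-Library.Function_Algebras" "HOL-Combinatorics.Permutations"
begin

text \<open>A superalgebra over F is given by a carrier A (an additive group inside 'a),
  its even and odd parts A0, A1, a multiplication mul, a unit one and a scalar
  multiplication smul by elements of the field 'f.\<close>

definition center :: "'a set \<Rightarrow> ('a \<Rightarrow> 'a \<Rightarrow> 'a) \<Rightarrow> 'a set" where
  "center A mul = {z \<in> A. \<forall>a\<in>A. mul z a = mul a z}"

fun mprod :: "('a \<Rightarrow> 'a \<Rightarrow> 'a) \<Rightarrow> 'a \<Rightarrow> 'a list \<Rightarrow> 'a" where
  "mprod mul one [] = one"
| "mprod mul one [x] = x"
| "mprod mul one (x # xs) = mul x (mprod mul one xs)"

text \<open>Variables are indexed 0..n-1.  A monomial w_{pi 0} ... w_{pi (n-1)} of P_n^gr is encoded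
  by the pair (S, pi), where pi permutes {..<n} and S is the set of indices i with w_i = z_i
  (odd variable); for i not in S, w_i = y_i (even variable).  These monomials form a basis of
  P_n^gr, so an element of P_n^gr is a coefficient function on such pairs.\<close>

definition mmonos :: "nat \<Rightarrow> (nat set \<times> (nat \<Rightarrow> nat)) set" where
  "mmonos n = {(S, pi). S \<subseteq> {..<n} \<and> pi permutes {..<n}}"

type_synonym 'f mpoly = "(nat set \<times> (nat \<Rightarrow> nat)) \<Rightarrow> 'f"

definition Pgr :: "nat \<Rightarrow> 'f::field mpoly set" where
  "Pgr n = {p. \<forall>m. m \<notin> mmonos n \<longrightarrow> p m = 0}"

definition pscale :: "'f::field \<Rightarrow> 'f mpoly \<Rightarrow> 'f mpoly" where
  "pscale c p = (\<lambda>m. c * p m)"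

text \<open>Evaluation: y_i \<mapsto> b i (even), z_i \<mapsto> c i (odd).\<close>
definition evalP :: "('a::ab_group_add \<Rightarrow> 'a \<Rightarrow> 'a) \<Rightarrow> 'a \<Rightarrow> ('f \<Rightarrow> 'a \<Rightarrow> 'a) \<Rightarrow> nat
    \<Rightarrow> 'f mpoly \<Rightarrow> (nat \<Rightarrow> 'a) \<Rightarrow> (nat \<Rightarrow> 'a) \<Rightarrow> 'a" where
  "evalP mul one smul n p b c =
     (\<Sum>(S, pi)\<in>mmonos n. smul (p (S, pi))
        (mprod mul one (map (\<lambda>j. if pi j \<in> S then c (pi j) else b (pi j)) [0..<n])))"

definition IdP :: "('a::ab_group_add \<Rightarrow> 'a \<Rightarrow> 'a) \<Rightarrow> 'a \<Rightarrow> ('f::field \<Rightarrow> 'a \<Rightarrow> 'a)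
    \<Rightarrow> 'a set \<Rightarrow> 'a set \<Rightarrow> nat \<Rightarrow> 'f mpoly set" where
  "IdP mul one smul A0 A1 n = {p \<in> Pgr n. \<forall>b c. (\<forall>i. b i \<in> A0) \<longrightarrow> (\<forall>i. c i \<in> A1)
       \<longrightarrow> evalP mul one smul n p b c = 0}"

text \<open>P_n^gr \<inter> C^gr(A) (for n \<ge> 1 the constant term is automatically zero)\<close>
definition CP :: "('a::ab_group_add \<Rightarrow> 'a \<Rightarrow> 'a) \<Rightarrow> 'a \<Rightarrow> ('f::field \<Rightarrow> 'a \<Rightarrow> 'a)
    \<Rightarrow> 'a set \<Rightarrow> 'a set \<Rightarrow> 'a set \<Rightarrow> nat \<Rightarrow> 'f mpoly set" where
  "CP mul one smul A A0 A1 n = {p \<in> Pgr n. \<forall>b c. (\<forall>i. b i \<in> A0) \<longrightarrow> (\<forall>i. c i \<in> A1)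
       \<longrightarrow> evalP mul one smul n p b c \<in> center A mul}"

text \<open>Dimension of a quotient V/W of finite-dimensional spaces, W \<subseteq> V.\<close>
definition qdim :: "'f::field mpoly set \<Rightarrow> 'f mpoly set \<Rightarrow> nat" where
  "qdim V W = vector_space.dim pscale V - vector_space.dim pscale W"

text \<open>The element (a_0,...,a_{n-1}; sigma) sends y_i to y_{sigma i} and z_i to a_{sigma i} z_{sigma i};
  hence the monomial (S, pi) goes to (prod_{i in S} a_{sigma i}) times the monomial (sigma ` S, sigma o pi).\<close>
definition act :: "(nat \<Rightarrow> 'f::field) \<Rightarrow> (nat \<Rightarrow> nat) \<Rightarrow> nat \<Rightarrow> 'f mpoly \<Rightarrow> 'f mpoly" where
  "act a sigma n p = (\<lambda>(S', pi'). if (S', pi') \<in> mmonos n then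
      (\<Prod>i\<in>S'. a i) * p (inv sigma ` S', inv sigma \<circ> pi') else 0)"

definition trace_on :: "'f::field mpoly set \<Rightarrow> ('f mpoly \<Rightarrow> 'f mpoly) \<Rightarrow> 'f" where
  "trace_on W T = (let B = (SOME B. B \<subseteq> W \<and> module.independent pscale B \<and> module.span pscale B = W)
     in \<Sum>v\<in>B. module.representation pscale B (T v) v)"

text \<open>Character of the quotient module V/W (W \<subseteq> V invariant) at g = (a; sigma).\<close>
definition qchar :: "nat \<Rightarrow> 'f::field mpoly set \<Rightarrow> 'f mpoly set \<Rightarrow> (nat \<Rightarrow> 'f) \<Rightarrow> (nat \<Rightarrow> nat) \<Rightarrow> 'f" where
  "qchar n V W a sigma = trace_on V (act a sigma n) - trace_on W (act a sigma n)"

text \<open>The irreducible character chi_{(n-i),(1^i)} of Z_2 wr S_n: induced from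
  (Z_2 wr S_{n-i}) x (Z_2 wr S_i) of the product of the trivial character on the first factor
  (lambda = (n-i), Z_2 acting trivially) and, on the second factor, the sign character of S_i
  (mu = (1^i)) with each Z_2 acting by -1.  Cosets correspond to i-subsets T of {..<n}
  (positions of the odd part); the induced character formula reads as follows.\<close>
definition chi_row_col :: "nat \<Rightarrow> nat \<Rightarrow> (nat \<Rightarrow> 'f::field) \<Rightarrow> (nat \<Rightarrow> nat) \<Rightarrow> 'f" where
  "chi_row_col n i a sigma =
     (\<Sum>T\<in>{T. T \<subseteq> {..<n} \<and> card T = i \<and> sigma ` T = T}.
        (\<Prod>j\<in>T. a j) * of_int (sign_on T sigma))"

text \<open>Elements are coefficient functions on finite subsets U of {1..t}, U standing for the monomial
  e_{u_1} ... e_{u_r} with u_1 < ... < u_r.\<close>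
type_synonym 'f grass = "nat set \<Rightarrow> 'f"

definition grass :: "nat \<Rightarrow> 'f::field grass set" where
  "grass t = {x. \<forall>U. x U \<noteq> 0 \<longrightarrow> U \<subseteq> {1..t}}"

definition grass0 :: "nat \<Rightarrow> 'f::field grass set" where
  "grass0 t = {x \<in> grass t. \<forall>U. x U \<noteq> 0 \<longrightarrow> even (card U)}"

definition grass1 :: "nat \<Rightarrow> 'f::field grass set" where
  "grass1 t = {x \<in> grass t. \<forall>U. x U \<noteq> 0 \<longrightarrow> odd (card U)}"

definition gsign :: "nat set \<Rightarrow> nat set \<Rightarrow> 'f::field" where
  "gsign S T = (-1) ^ card {(s, u). s \<in> S \<and> u \<in> T \<and> u < s}"

definition gmul :: "'f::field grass \<Rightarrow> 'f grass \<Rightarrow> 'f grass" where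
  "gmul x y = (\<lambda>U. \<Sum>S\<in>Pow U. gsign S (U - S) * x S * y (U - S))"

definition gone :: "'f::field grass" where
  "gone = (\<lambda>U. if U = {} then 1 else 0)"

definition gsmul :: "'f::field \<Rightarrow> 'f grass \<Rightarrow> 'f grass" where
  "gsmul c x = (\<lambda>U. c * x U)"

definition CPG :: "'f::field itself \<Rightarrow> nat \<Rightarrow> nat \<Rightarrow> 'f mpoly set" where
  "CPG _ t n = CP gmul gone gsmul (grass t) (grass0 t) (grass1 t) n"

definition IdPG :: "'f::field itself \<Rightarrow> nat \<Rightarrow> nat \<Rightarrow> 'f mpoly set" where
  "IdPG _ t n = IdP gmul gone gsmul (grass0 t) (grass1 t) n"

definition cgrz :: "'f::field itself \<Rightarrow> nat \<Rightarrow> nat \<Rightarrow> nat" where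
  "cgrz F t n = qdim (Pgr n :: 'f mpoly set) (CPG F t n)"

definition deltagr :: "'f::field itself \<Rightarrow> nat \<Rightarrow> nat \<Rightarrow> nat" where
  "deltagr F t n = qdim (CPG F t n) (IdPG F t n)"

definition chigrz :: "nat \<Rightarrow> nat \<Rightarrow> (nat \<Rightarrow> 'f::field) \<Rightarrow> (nat \<Rightarrow> nat) \<Rightarrow> 'f" where
  "chigrz t n a sigma = qchar n (Pgr n) (CPG TYPE('f) t n) a sigma"

definition chiDelta :: "nat \<Rightarrow> nat \<Rightarrow> (nat \<Rightarrow> 'f::field) \<Rightarrow> (nat \<Rightarrow> nat) \<Rightarrow> 'f" where
  "chiDelta t n a sigma = qchar n (CPG TYPE('f) t n) (IdPG TYPE('f) t n) a sigma"

end

theory Submission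
  imports Defs
begin

text \<open>Evaluated on homogeneous elements of G_t, a multilinear monomial with odd variables at the
  positions S equals, up to a sign depending only on the order of its odd variables, the product
  of the same factors in index order. So a polynomial q acts on G_t only through one scalar
  ncoeff n S q per subset S. Evaluating at 1 and distinct generators shows that q is a graded
  identity iff these scalars vanish for all card S \<le> t, and q is central iff they vanish for
  odd card S < t: an odd monomial anticommutes with any spare generator, while even elements and
  elements of degree t are central. Both spaces are thus cut out by coordinates indexed by
  subsets; complements are spanned by explicit signed sums of monomials, which the wreath product
  permutes up to the scalar (\<Prod>i\<in>S. a i) * sign. Counting subsets of each size gives the
  codimensions, and the subsets fixed by the permutation give the characters.\<close>

lemma sum_Pow_complement: "finite U \<Longrightarrow> (\<Sum>S\<in>Pow U. f S) = (\<Sum>S\<in>Pow U. f (U - S))"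
  by (rule sum.reindex_bij_witness[where i="\<lambda>S. U - S" and j="\<lambda>S. U - S"])
     (auto simp: Diff_Diff_Int inf.absorb2)

lemma sum_fun_apply: "(\<Sum>i\<in>I. f i) x = (\<Sum>i\<in>I. f i x)"
  by (induction I rule: infinite_finite_induct) simp_all

lemma card_split_subset: "finite U \<Longrightarrow> S \<subseteq> U \<Longrightarrow> card U = card S + card (U - S)"
  by (metis card_Diff_subset card_mono finite_subset le_add_diff_inverse)

lemma prod_list_map_eq_1:
  "(\<And>z. z \<in> set L \<Longrightarrow> h z = 1) \<Longrightarrow> prod_list (map h L) = (1::'a::comm_monoid_mult)"
  by (induction L) auto

lemma prod_list_map_mult:
  "prod_list (map (\<lambda>y. g y * h y) L) = prod_list (map g L) * (prod_list (map h L) :: 'a::comm_monoid_mult)"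
  by (induction L) (simp_all add: algebra_simps)

lemma prod_list_sort: "prod_list (map h (sort L)) = (prod_list (map h L) :: 'a::comm_monoid_mult)"
  by (metis mset_map mset_sort prod_mset_prod_list)

section \<open>The Grassmann algebra\<close>

lemma finite_inversion_pairs:
  "finite S \<Longrightarrow> finite T \<Longrightarrow> finite {(s, u). s \<in> S \<and> u \<in> T \<and> u < s}"
  by (rule finite_subset[of _ "S \<times> T"]) auto

lemma gsign_empty_left [simp]: "gsign {} T = 1"
  and gsign_empty_right [simp]: "gsign S {} = 1"
  by (simp_all add: gsign_def)

lemma gsign_squared: "(gsign S T :: 'f::field) * gsign S T = 1"
  by (simp add: gsign_def power_add[symmetric] mult_2[symmetric] power_mult)

lemma gsign_Un_left:
  assumes "finite A" "finite B" "finite C" "A \<inter> B = {}"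
  shows "(gsign (A \<union> B) C :: 'f::field) = gsign A C * gsign B C"
proof -
  have "{(s, u). s \<in> A \<union> B \<and> u \<in> C \<and> u < s} =
        {(s, u). s \<in> A \<and> u \<in> C \<and> u < s} \<union> {(s, u). s \<in> B \<and> u \<in> C \<and> u < s}" by auto
  moreover have "card \<dots> = card {(s, u). s \<in> A \<and> u \<in> C \<and> u < s} + card {(s, u). s \<in> B \<and> u \<in> C \<and> u < s}"
    by (rule card_Un_disjoint) (use assms in \<open>auto intro: finite_inversion_pairs\<close>)
  ultimately show ?thesis by (simp add: gsign_def power_add)
qed

lemma gsign_Un_right:
  assumes "finite A" "finite B" "finite C" "B \<inter> C = {}"
  shows "(gsign A (B \<union> C) :: 'f::field) = gsign A B * gsign A C"
proof -
  have "{(s, u). s \<in> A \<and> u \<in> B \<union> C \<and> u < s} =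
        {(s, u). s \<in> A \<and> u \<in> B \<and> u < s} \<union> {(s, u). s \<in> A \<and> u \<in> C \<and> u < s}" by auto
  moreover have "card \<dots> = card {(s, u). s \<in> A \<and> u \<in> B \<and> u < s} + card {(s, u). s \<in> A \<and> u \<in> C \<and> u < s}"
    by (rule card_Un_disjoint) (use assms in \<open>auto intro: finite_inversion_pairs\<close>)
  ultimately show ?thesis by (simp add: gsign_def power_add)
qed

lemma gsign_mult_gsign_swap:
  assumes "finite S" "finite T" "S \<inter> T = {}"
  shows "(gsign S T :: 'f::field) * gsign T S = (-1) ^ (card S * card T)"
proof -
  let ?A = "{(s, u). s \<in> S \<and> u \<in> T \<and> u < s}"
  let ?B = "{(s, u). s \<in> S \<and> u \<in> T \<and> s < u}"
  let ?C = "{(s, u). s \<in> T \<and> u \<in> S \<and> u < s}"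
  have "?C = prod.swap ` ?B" by auto
  then have card_C: "card ?C = card ?B" by (simp add: card_image)
  have "S \<times> T = ?A \<union> ?B" using assms(3) by (auto simp: linorder_neq_iff)
  moreover have "card (?A \<union> ?B) = card ?A + card ?B"
    by (rule card_Un_disjoint) (use assms in \<open>auto intro: finite_subset[of _ "S \<times> T"]\<close>)
  ultimately have "card ?A + card ?C = card S * card T" using card_C by (metis card_cartesian_product)
  then show ?thesis by (simp add: gsign_def power_add[symmetric])
qed

lemma gmul_infinite: "infinite U \<Longrightarrow> gmul x y U = 0"
  by (simp add: gmul_def)

lemma gmul_commute_sign:
  assumes "\<And>S V. finite S \<Longrightarrow> finite V \<Longrightarrow> S \<inter> V = {} \<Longrightarrow> x S \<noteq> 0 \<Longrightarrow> y V \<noteq> 0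
             \<Longrightarrow> ((-1) ^ (card S * card V) :: 'f::field) = e"
  shows "gmul x y = gsmul e (gmul y x)"
proof
  fix U :: "nat set"
  show "gmul x y U = gsmul e (gmul y x) U"
  proof (cases "finite U")
    case False then show ?thesis by (simp add: gmul_infinite gsmul_def)
  next
    case True
    have "gmul y x U = (\<Sum>S\<in>Pow U. gsign (U - S) (U - (U - S)) * y (U - S) * x (U - (U - S)))"
      unfolding gmul_def by (rule sum_Pow_complement[OF True])
    also have "\<dots> = (\<Sum>S\<in>Pow U. gsign (U - S) S * y (U - S) * x S)"
      by (rule sum.cong) (auto simp: Diff_Diff_Int Int_absorb1)
    finally have yx: "gmul y x U = \<dots>" .
    have "gmul x y U = (\<Sum>S\<in>Pow U. e * (gsign (U - S) S * y (U - S) * x S))"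
      unfolding gmul_def
    proof (rule sum.cong[OF refl])
      fix S assume S: "S \<in> Pow U"
      show "gsign S (U - S) * x S * y (U - S) = e * (gsign (U - S) S * y (U - S) * x S)"
      proof (cases "x S = 0 \<or> y (U - S) = 0")
        case False
        have fin: "finite S" "finite (U - S)" using True S finite_subset by auto
        have "gsign S (U - S) * gsign (U - S) S = e"
          using gsign_mult_gsign_swap[OF fin] assms[OF fin] False by auto
        then have "gsign S (U - S) = e * gsign (U - S) S"
          using gsign_squared[of "U - S" S] by (metis mult.assoc mult.right_neutral)
        then show ?thesis by simp
      qed auto
    qed
    then show ?thesis by (simp add: yx gsmul_def sum_distrib_left)
  qed
qed

definition gmul3 :: "'f::field grass \<Rightarrow> 'f grass \<Rightarrow> 'f grass \<Rightarrow> 'f grass" where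
  "gmul3 x y z U = (\<Sum>R\<in>Pow U. \<Sum>Q\<in>Pow (U - R).
     gsign R Q * gsign R (U - R - Q) * gsign Q (U - R - Q) * x R * y Q * z (U - R - Q))"

lemma gmul_gmul_left_eq_gmul3:
  fixes x y z :: "'f::field grass"
  assumes U: "finite U"
  shows "gmul (gmul x y) z U = gmul3 x y z U"
proof -
  define F where "F = (\<lambda>(R, Q). gsign R Q * gsign R (U - R - Q) * gsign Q (U - R - Q) *
      x R * y Q * z (U - R - Q))"
  have F_eq: "F (R, S - R) = gsign S (U - S) * (gsign R (S - R) * x R * y (S - R)) * z (U - S)"
    if "R \<subseteq> S" "S \<subseteq> U" for R S
  proof -
    have "finite R" "finite (S - R)" "finite (U - S)" using that U by (auto intro: finite_subset)
    then have "gsign (R \<union> (S - R)) (U - S) = (gsign R (U - S) * gsign (S - R) (U - S) :: 'f)"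
      by (intro gsign_Un_left) auto
    moreover have "U - R - (S - R) = U - S" "R \<union> (S - R) = S" using that by auto
    ultimately show ?thesis by (simp add: F_def algebra_simps)
  qed
  have "gmul (gmul x y) z U = (\<Sum>(S, R)\<in>Sigma (Pow U) Pow. gsign S (U - S) * (gsign R (S - R) * x R * y (S - R)) * z (U - S))"
    unfolding gmul_def sum_distrib_left sum_distrib_right
    by (rule sum.Sigma) (use U in \<open>auto intro: finite_subset\<close>)
  also have "\<dots> = (\<Sum>(R, Q)\<in>Sigma (Pow U) (\<lambda>R. Pow (U - R)). F (R, Q))"
    by (rule sum.reindex_bij_witness[where i="\<lambda>(R, Q). (R \<union> Q, R)" and j="\<lambda>(S, R). (R, S - R)"])
       (auto simp: F_eq)
  also have "\<dots> = gmul3 x y z U"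
    unfolding gmul3_def F_def by (subst sum.Sigma) (use U in \<open>auto intro: finite_subset\<close>)
  finally show ?thesis .
qed

lemma gmul_gmul_right_eq_gmul3:
  fixes x y z :: "'f::field grass"
  assumes U: "finite U"
  shows "gmul x (gmul y z) U = gmul3 x y z U"
  unfolding gmul_def gmul3_def sum_distrib_left
proof (intro sum.cong refl)
  fix R Q assume R: "R \<in> Pow U" and Q: "Q \<in> Pow (U - R)"
  have "finite R" "finite Q" "finite (U - R - Q)" using R Q U by (auto intro: finite_subset)
  moreover have "U - R = Q \<union> (U - R - Q)" using Q by auto
  ultimately have "gsign R (U - R) = (gsign R Q * gsign R (U - R - Q) :: 'f)"
    by (metis gsign_Un_right Diff_disjoint)
  then show "gsign R (U - R) * x R * (gsign Q (U - R - Q) * y Q * z (U - R - Q)) =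
      gsign R Q * gsign R (U - R - Q) * gsign Q (U - R - Q) * x R * y Q * z (U - R - Q)"
    by (simp add: algebra_simps)
qed

lemma gmul_assoc: "gmul (gmul x y) z = gmul x (gmul y (z :: 'f::field grass))"
proof
  fix U :: "nat set"
  show "gmul (gmul x y) z U = gmul x (gmul y z) U"
    by (cases "finite U") (simp_all add: gmul_infinite gmul_gmul_left_eq_gmul3 gmul_gmul_right_eq_gmul3)
qed

lemma grass_support_finite: "x \<in> grass t \<Longrightarrow> x U \<noteq> 0 \<Longrightarrow> finite U"
  unfolding grass_def by (auto intro: finite_subset)

lemma gmul_one_right: "x \<in> grass t \<Longrightarrow> gmul x gone = x"
proof
  fix U assume x: "x \<in> grass t"
  show "gmul x gone U = x U"
  proof (cases "finite U")
    case False then show ?thesis using grass_support_finite[OF x] by (auto simp: gmul_infinite)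
  next
    case True
    have "gmul x gone U = (\<Sum>S\<in>Pow U. if S = U then x U else 0)"
      unfolding gmul_def by (rule sum.cong) (auto simp: gone_def)
    then show ?thesis using True by simp
  qed
qed

lemma gmul_gsmul_left: "gmul (gsmul c x) y = gsmul c (gmul x y)"
  and gmul_gsmul_right: "gmul x (gsmul c y) = gsmul c (gmul x y)"
  by (simp_all add: gmul_def gsmul_def fun_eq_iff sum_distrib_left algebra_simps)

lemma gmul_add_left: "gmul (x + x') y = gmul x y + gmul x' y"
  and gmul_add_right: "gmul x (y + y') = gmul x y + gmul x y'"
  by (simp_all add: gmul_def fun_eq_iff sum.distrib algebra_simps)

lemma gmul_zero_left [simp]: "gmul 0 y = 0"
  and gmul_zero_right [simp]: "gmul x 0 = 0"
  by (simp_all add: gmul_def fun_eq_iff)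

lemma gmul_sum_left: "gmul (\<Sum>i\<in>I. f i) y = (\<Sum>i\<in>I. gmul (f i) y)"
  by (induction I rule: infinite_finite_induct)
     (metis gmul_zero_left sum.infinite, metis gmul_zero_left sum.empty, metis gmul_add_left sum.insert)

lemma gmul_sum_right: "gmul y (\<Sum>i\<in>I. f i) = (\<Sum>i\<in>I. gmul y (f i))"
  by (induction I rule: infinite_finite_induct)
     (metis gmul_zero_right sum.infinite, metis gmul_zero_right sum.empty, metis gmul_add_right sum.insert)

lemma gsmul_gsmul [simp]: "gsmul a (gsmul b x) = gsmul (a * b) x"
  and gsmul_one [simp]: "gsmul 1 x = x"
  and gsmul_zero [simp]: "gsmul c 0 = 0"
  and gsmul_zero_left [simp]: "gsmul 0 x = 0"
  by (simp_all add: gsmul_def fun_eq_iff)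

lemma gsmul_sum_left: "gsmul (\<Sum>i\<in>I. c i) x = (\<Sum>i\<in>I. gsmul (c i) x)"
  by (simp add: gsmul_def fun_eq_iff sum_fun_apply sum_distrib_right)

lemma gmul_nonzero_split:
  assumes "gmul x y U \<noteq> 0"
  obtains S where "finite U" "S \<subseteq> U" "x S \<noteq> 0" "y (U - S) \<noteq> 0"
proof -
  have "finite U" using assms gmul_infinite by blast
  moreover obtain S where "S \<in> Pow U" "gsign S (U - S) * x S * y (U - S) \<noteq> 0"
    using assms unfolding gmul_def by (meson sum.not_neutral_contains_not_neutral)
  ultimately show ?thesis using that by auto
qed

lemma gmul_grass: "x \<in> grass t \<Longrightarrow> y \<in> grass t \<Longrightarrow> gmul x y \<in> grass t"
  unfolding grass_def by (auto elim!: gmul_nonzero_split)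

lemma gone_grass: "gone \<in> grass t"
  and gsmul_grass: "x \<in> grass t \<Longrightarrow> gsmul c x \<in> grass t"
  by (auto simp: grass_def gone_def gsmul_def)

lemma add_grass: "x \<in> grass t \<Longrightarrow> y \<in> grass t \<Longrightarrow> x + y \<in> grass t"
proof -
  assume xy: "x \<in> grass t" "y \<in> grass t"
  { fix U assume "(x + y) U \<noteq> 0"
    then have "x U \<noteq> 0 \<or> y U \<noteq> 0" by auto
    then have "U \<subseteq> {1..t}" using xy unfolding grass_def by blast }
  then show ?thesis unfolding grass_def by blast
qed

lemma sum_grass: "(\<And>i. i \<in> I \<Longrightarrow> f i \<in> grass t) \<Longrightarrow> (\<Sum>i\<in>I. f i) \<in> grass t"
proof (induction I rule: infinite_finite_induct)
  case (insert i I)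
  then have "f i + sum f I \<in> grass t" by (intro add_grass) auto
  then show ?case by (simp only: sum.insert[OF insert.hyps])
qed (simp_all add: grass_def)

definition homogeneous :: "'f::field grass \<Rightarrow> bool \<Rightarrow> bool" where
  "homogeneous x b \<longleftrightarrow> (\<forall>U. x U \<noteq> 0 \<longrightarrow> odd (card U) = b)"

definition deg_ge :: "nat \<Rightarrow> 'f::field grass \<Rightarrow> bool" where
  "deg_ge d x \<longleftrightarrow> (\<forall>U. x U \<noteq> 0 \<longrightarrow> d \<le> card U)"

definition gmonom :: "nat set \<Rightarrow> 'f::field grass" where
  "gmonom A = (\<lambda>U. if U = A then 1 else 0)"

lemma grass0_iff: "x \<in> grass0 t \<longleftrightarrow> x \<in> grass t \<and> homogeneous x False"
  and grass1_iff: "x \<in> grass1 t \<longleftrightarrow> x \<in> grass t \<and> homogeneous x True"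
  by (auto simp: grass0_def grass1_def homogeneous_def)

lemma homogeneous_gone: "homogeneous gone False"
  by (simp add: homogeneous_def gone_def)

lemma deg_ge_0 [simp]: "deg_ge 0 x"
  by (simp add: deg_ge_def)

lemma deg_ge_mono: "deg_ge d x \<Longrightarrow> d' \<le> d \<Longrightarrow> deg_ge d' x"
  by (auto simp: deg_ge_def)

lemma homogeneous_odd_deg_ge_1: "homogeneous x True \<Longrightarrow> deg_ge 1 x"
  unfolding homogeneous_def deg_ge_def by (metis One_nat_def Suc_leI odd_pos)

lemma homogeneous_gmul:
  assumes "homogeneous x b1" "homogeneous y b2"
  shows "homogeneous (gmul x y) (b1 \<noteq> b2)"
  unfolding homogeneous_def
proof (intro allI impI)
  fix U assume "gmul x y U \<noteq> 0"
  then obtain S where "finite U" "S \<subseteq> U" "x S \<noteq> 0" "y (U - S) \<noteq> 0"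
    by (rule gmul_nonzero_split)
  then show "odd (card U) = (b1 \<noteq> b2)"
    using assms card_split_subset[of U S] unfolding homogeneous_def by auto
qed

lemma deg_ge_gmul:
  assumes "deg_ge d1 x" "deg_ge d2 y"
  shows "deg_ge (d1 + d2) (gmul x y)"
  unfolding deg_ge_def
proof (intro allI impI)
  fix U assume "gmul x y U \<noteq> 0"
  then obtain S where "finite U" "S \<subseteq> U" "x S \<noteq> 0" "y (U - S) \<noteq> 0"
    by (rule gmul_nonzero_split)
  then show "d1 + d2 \<le> card U"
    using assms card_split_subset[of U S] unfolding deg_ge_def by (metis add_le_mono)
qed

lemma grass_deg_ge_eq_0:
  assumes "x \<in> grass t" "deg_ge d x" "t < d"
  shows "x = 0"
proof
  fix U show "x U = 0 U"
  proof (rule ccontr)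
    assume "x U \<noteq> 0 U"
    then have "U \<subseteq> {1..t}" "d \<le> card U" using assms by (auto simp: grass_def deg_ge_def)
    moreover have "card U \<le> t" if "U \<subseteq> {1..t}"
      using card_mono[OF _ that] by simp
    ultimately show False using assms(3) by linarith
  qed
qed

lemma gmul_homogeneous_commute:
  assumes "homogeneous x b1" "homogeneous y b2"
  shows "gmul x y = gsmul (if b1 \<and> b2 then -1 else 1) (gmul y x)"
proof (rule gmul_commute_sign)
  fix S V assume "x S \<noteq> 0" "y V \<noteq> 0"
  then have "odd (card S) = b1" "odd (card V) = b2" using assms by (auto simp: homogeneous_def)
  then show "(-1) ^ (card S * card V) = (if b1 \<and> b2 then -1 else (1::'a))" by auto
qed

lemma gmul_even_commute:
  assumes "homogeneous x False"
  shows "gmul x y = gmul y (x :: 'f::field grass)"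
proof -
  have "gmul x y = gsmul 1 (gmul y x)"
  proof (rule gmul_commute_sign)
    fix S V assume "x S \<noteq> 0"
    then have "even (card S)" using assms by (auto simp: homogeneous_def)
    then show "(-1) ^ (card S * card V) = (1::'f)" by simp
  qed
  then show ?thesis by simp
qed

text \<open>In G_t the only monomial of degree \<ge> t is e_1 \<dots> e_t, and the only monomial disjoint
  from it is 1.\<close>
lemma gmul_top_degree_commute:
  assumes "x \<in> grass t" "deg_ge t x" "y \<in> grass t"
  shows "gmul x y = gmul y (x :: 'f::field grass)"
proof -
  have "gmul x y = gsmul 1 (gmul y x)"
  proof (rule gmul_commute_sign)
    fix S V assume SV: "finite S" "finite V" "S \<inter> V = {}" "x S \<noteq> 0" "y V \<noteq> 0"
    have S: "S \<subseteq> {1..t}" "t \<le> card S" using assms SV by (auto simp: grass_def deg_ge_def)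
    then have "S = {1..t}"
      using card_mono[OF _ S(1)] by (intro card_subset_eq) auto
    moreover have "V \<subseteq> {1..t}" using assms SV by (auto simp: grass_def)
    ultimately have "V = {}" using SV by auto
    then show "(-1) ^ (card S * card V) = (1::'f)" by simp
  qed
  then show ?thesis by simp
qed

lemma gone_eq_gmonom_empty: "gone = gmonom {}"
  by (simp add: gone_def gmonom_def fun_eq_iff)

lemma gmul_gmonom:
  assumes "finite A" "finite B" "A \<inter> B = {}"
  shows "gmul (gmonom A) (gmonom B) = gsmul (gsign A B) (gmonom (A \<union> B) :: 'f::field grass)"
proof
  fix U :: "nat set"
  show "gmul (gmonom A) (gmonom B) U = gsmul (gsign A B) (gmonom (A \<union> B) :: 'f grass) U"
  proof (cases "finite U")
    case False
    then have "U \<noteq> A \<union> B" using assms by auto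
    then show ?thesis using False by (simp add: gmul_infinite gsmul_def gmonom_def)
  next
    case True
    have "gmul (gmonom A) (gmonom B) U = (\<Sum>S\<in>Pow U. if S = A \<and> U = A \<union> B then gsign A B else (0::'f))"
      unfolding gmul_def using assms(3) by (intro sum.cong) (auto simp: gmonom_def)
    also have "\<dots> = (if U = A \<union> B then gsign A B else 0)"
      using True by (auto simp: sum.delta')
    finally show ?thesis by (simp add: gsmul_def gmonom_def)
  qed
qed

lemma gsign_singleton_less: "(\<And>u. u \<in> B \<Longrightarrow> j < u) \<Longrightarrow> (gsign {j} B :: 'f::field) = 1"
  unfolding gsign_def by (metis (no_types, lifting) case_prodE card.empty empty_Collect_eq
      less_asym power_0 singletonD)

lemma mprod_Cons_grass:
  "x \<in> grass t \<Longrightarrow> mprod gmul gone (x # xs) = gmul x (mprod gmul gone xs)"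
  by (cases xs) (simp_all add: gmul_one_right)

lemma mprod_homogeneous:
  assumes "\<And>i. i \<in> set L \<Longrightarrow> f i \<in> grass t \<and> homogeneous (f i) (i \<in> S)"
  defines "m \<equiv> length (filter (\<lambda>i. i \<in> S) L)"
  shows "mprod gmul gone (map f L) \<in> grass t \<and> homogeneous (mprod gmul gone (map f L)) (odd m)
         \<and> deg_ge m (mprod gmul gone (map f L))"
  using assms(1) unfolding m_def
proof (induction L)
  case Nil then show ?case by (simp add: gone_grass homogeneous_gone)
next
  case (Cons x L)
  then have IH: "mprod gmul gone (map f L) \<in> grass t"
      "homogeneous (mprod gmul gone (map f L)) (odd (length (filter (\<lambda>i. i \<in> S) L)))"
      "deg_ge (length (filter (\<lambda>i. i \<in> S) L)) (mprod gmul gone (map f L))" by auto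
  have fx: "f x \<in> grass t" "homogeneous (f x) (x \<in> S)" using Cons.prems by auto
  have "deg_ge (if x \<in> S then 1 else 0) (f x)" using fx(2) homogeneous_odd_deg_ge_1 by auto
  from deg_ge_gmul[OF this IH(3)] show ?case
    using mprod_Cons_grass[OF fx(1)] gmul_grass[OF fx(1) IH(1)] homogeneous_gmul[OF fx(2) IH(2)]
    by (auto split: if_splits)
qed

text \<open>Sorting a product of homogeneous factors, odd exactly at the indices in S, into index
  order costs a factor -1 per inversion between two odd factors.\<close>
fun sort_sign :: "nat set \<Rightarrow> nat list \<Rightarrow> 'f::field" where
  "sort_sign S [] = 1"
| "sort_sign S (x # L) =
     prod_list (map (\<lambda>y. if x \<in> S \<and> y \<in> S \<and> y < x then -1 else 1) L) * sort_sign S L"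

lemma gmul_mprod_insort:
  fixes f :: "nat \<Rightarrow> 'f::field grass"
  assumes "sorted M" "distinct (x # M)" "\<And>i. i \<in> set (x # M) \<Longrightarrow> f i \<in> grass t \<and> homogeneous (f i) (i \<in> S)"
  shows "gmul (f x) (mprod gmul gone (map f M)) =
    gsmul (prod_list (map (\<lambda>y. if x \<in> S \<and> y \<in> S \<and> y < x then -1 else 1) M))
      (mprod gmul gone (map f (insort x M)))"
  using assms
proof (induction M)
  case Nil
  then show ?case using gmul_one_right by fastforce
next
  case (Cons y M)
  let ?h = "\<lambda>z. if x \<in> S \<and> z \<in> S \<and> z < x then -1 else (1::'f)"
  have fx: "f x \<in> grass t" "homogeneous (f x) (x \<in> S)"
    and fy: "f y \<in> grass t" "homogeneous (f y) (y \<in> S)"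
    using Cons.prems by auto
  show ?case
  proof (cases "x \<le> y")
    case True
    have "prod_list (map ?h (y # M)) = 1"
      using Cons.prems True by (intro prod_list_map_eq_1) auto
    then show ?thesis using True mprod_Cons_grass[OF fx(1), of "map f (y # M)"] by simp
  next
    case False
    define e where "e = (if x \<in> S \<and> y \<in> S then -1 else (1::'f))"
    have IH: "gmul (f x) (mprod gmul gone (map f M)) = gsmul (prod_list (map ?h M)) (mprod gmul gone (map f (insort x M)))"
      using Cons.IH Cons.prems by auto
    have "gmul (f x) (mprod gmul gone (map f (y # M))) = gmul (gmul (f x) (f y)) (mprod gmul gone (map f M))"
      using mprod_Cons_grass[OF fy(1)] by (simp add: gmul_assoc)
    also have "\<dots> = gsmul e (gmul (f y) (gmul (f x) (mprod gmul gone (map f M))))"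
      using gmul_homogeneous_commute[OF fx(2) fy(2)] by (simp add: e_def gmul_gsmul_left gmul_assoc)
    also have "\<dots> = gsmul (e * prod_list (map ?h M)) (mprod gmul gone (map f (y # insort x M)))"
      using mprod_Cons_grass[OF fy(1)] by (simp add: IH gmul_gsmul_right)
    finally show ?thesis using False by (simp add: e_def)
  qed
qed

lemma mprod_sort:
  fixes f :: "nat \<Rightarrow> 'f::field grass"
  assumes "distinct L" "\<And>i. i \<in> set L \<Longrightarrow> f i \<in> grass t \<and> homogeneous (f i) (i \<in> S)"
  shows "mprod gmul gone (map f L) = gsmul (sort_sign S L) (mprod gmul gone (map f (sort L)))"
  using assms
proof (induction L)
  case (Cons x L)
  let ?h = "\<lambda>z. if x \<in> S \<and> z \<in> S \<and> z < x then -1 else (1::'f)"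
  have fx: "f x \<in> grass t" using Cons.prems by auto
  have IH: "mprod gmul gone (map f L) = gsmul (sort_sign S L) (mprod gmul gone (map f (sort L)))"
    using Cons by auto
  have ins: "gmul (f x) (mprod gmul gone (map f (sort L))) =
      gsmul (prod_list (map ?h (sort L))) (mprod gmul gone (map f (insort x (sort L))))"
    by (rule gmul_mprod_insort) (use Cons.prems in auto)
  have "mprod gmul gone (map f (x # L)) = gmul (f x) (mprod gmul gone (map f L))"
    using mprod_Cons_grass[OF fx] by simp
  also have "\<dots> = gsmul (sort_sign S L * prod_list (map ?h L)) (mprod gmul gone (map f (insort x (sort L))))"
    by (simp add: IH gmul_gsmul_right ins prod_list_sort)
  finally show ?case by (simp add: mult.commute)
qed simp

lemma mprod_zero: "0 \<in> set xs \<Longrightarrow> mprod gmul gone xs = (0 :: 'f::field grass)"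
  by (induction xs rule: induct_list012) auto

lemma mprod_Cons_gmonom:
  "finite A \<Longrightarrow> mprod gmul gone (gmonom A # xs) = gmul (gmonom A) (mprod gmul gone xs :: 'f::field grass)"
  by (cases xs) (simp_all add: gone_eq_gmonom_empty gmul_gmonom)

lemma mprod_gmonoms:
  assumes "sorted L" "distinct L" "strict_mono_on S0 g"
  shows "mprod gmul gone (map (\<lambda>i. if i \<in> S0 then gmonom {g i} else gone) L)
    = (gmonom (g ` (set L \<inter> S0)) :: 'f::field grass)"
  using assms(1,2)
proof (induction L)
  case Nil then show ?case by (simp add: gone_eq_gmonom_empty)
next
  case (Cons x L)
  have IH: "mprod gmul gone (map (\<lambda>i. if i \<in> S0 then gmonom {g i} else gone) L) = (gmonom (g ` (set L \<inter> S0)) :: 'f grass)"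
    using Cons by auto
  have gt: "x < y" if "y \<in> set L" for y
  proof -
    have "x \<le> y" "x \<noteq> y" using Cons.prems that by auto
    then show ?thesis by simp
  qed
  show ?case
  proof (cases "x \<in> S0")
    case True
    have A: "\<And>u. u \<in> g ` (set L \<inter> S0) \<Longrightarrow> g x < u"
      using gt True assms(3) by (auto simp: strict_mono_on_def)
    have "mprod gmul gone (map (\<lambda>i. if i \<in> S0 then gmonom {g i} else gone) (x # L))
        = gmul (gmonom {g x}) (gmonom (g ` (set L \<inter> S0)) :: 'f grass)"
      using True IH mprod_Cons_gmonom[of "{g x}", where 'f='f] by simp
    also have "\<dots> = gsmul (gsign {g x} (g ` (set L \<inter> S0))) (gmonom ({g x} \<union> g ` (set L \<inter> S0)))"
      by (rule gmul_gmonom) (use A in auto)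
    also have "\<dots> = gmonom (g ` (set (x # L) \<inter> S0))"
    proof -
      have "gsign {g x} (g ` (set L \<inter> S0)) = (1::'f)" by (rule gsign_singleton_less) (rule A)
      then show ?thesis using True by simp
    qed
    finally show ?thesis .
  next
    case False
    then show ?thesis
      using IH mprod_Cons_gmonom[of "{}", where 'f='f] gmul_gmonom[of "{}" "g ` (set L \<inter> S0)"]
      by (simp add: gone_eq_gmonom_empty)
  qed
qed

section \<open>The sign of a permutation as a product over inversions\<close>

definition order_flip :: "(nat \<Rightarrow> nat) \<Rightarrow> nat set \<Rightarrow> nat \<Rightarrow> nat \<Rightarrow> 'f::field" where
  "order_flip s S x y = (if x \<in> S \<and> y \<in> S \<and> ((x < y) \<noteq> (s x < s y)) then -1 else 1)"

definition prod_pairs :: "(nat \<Rightarrow> nat \<Rightarrow> 'f::field) \<Rightarrow> nat set \<Rightarrow> 'f" where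
  "prod_pairs g A = (\<Prod>x\<in>A. \<Prod>y\<in>{y\<in>A. x < y}. g x y)"

definition inversion_sign :: "(nat \<Rightarrow> nat) \<Rightarrow> nat set \<Rightarrow> 'f::field" where
  "inversion_sign s S = prod_pairs (order_flip s S) S"

lemma order_flip_commute: "inj_on s S \<Longrightarrow> order_flip s S x y = order_flip s S y x"
  unfolding order_flip_def by (cases "x = y") (auto simp: inj_on_def linorder_neq_iff)

lemma prod_pairs_insert:
  assumes "finite A" "x \<notin> A" "\<And>u v. g u v = g v u"
  shows "prod_pairs g (insert x A) = (\<Prod>y\<in>A. g x y) * (prod_pairs g A :: 'f::field)"
proof -
  have row: "(\<Prod>y\<in>{y \<in> insert x A. z < y}. g z y) = (if z < x then g x z else 1) * (\<Prod>y\<in>{y \<in> A. z < y}. g z y)"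
    if "z \<in> A" for z
  proof (cases "z < x")
    case True
    then have "{y \<in> insert x A. z < y} = insert x {y \<in> A. z < y}" by auto
    then show ?thesis using True assms by simp
  next
    case False
    then have "{y \<in> insert x A. z < y} = {y \<in> A. z < y}" by auto
    then show ?thesis using False by simp
  qed
  have "{y \<in> insert x A. x < y} = {y \<in> A. x < y}" by auto
  then have "prod_pairs g (insert x A) = (\<Prod>y\<in>{y\<in>A. x < y}. g x y) * (\<Prod>z\<in>A. \<Prod>y\<in>{y\<in>insert x A. z < y}. g z y)"
    unfolding prod_pairs_def by (simp add: prod.insert[OF assms(1,2)])
  also have "\<dots> = (\<Prod>y\<in>{y \<in> A. x < y}. g x y) * ((\<Prod>z\<in>A. if z < x then g x z else 1) * prod_pairs g A)"
    unfolding prod_pairs_def prod.distrib[symmetric] by (simp only: row cong: prod.cong)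
  also have "(\<Prod>z\<in>A. if z < x then g x z else 1) = (\<Prod>y\<in>{y \<in> A. y < x}. g x y)"
    using assms(1) by (simp add: prod.If_cases Int_def conj_commute)
  also have "(\<Prod>y\<in>{y \<in> A. x < y}. g x y) * ((\<Prod>y\<in>{y \<in> A. y < x}. g x y) * prod_pairs g A)
      = (\<Prod>y\<in>{y \<in> A. x < y} \<union> {y \<in> A. y < x}. g x y) * prod_pairs g A"
    using assms(1) by (subst prod.union_disjoint) auto
  also have "{y \<in> A. x < y} \<union> {y \<in> A. y < x} = A"
    using assms(2) by (auto simp: not_less le_less)
  finally show ?thesis .
qed

lemma prod_pairs_cong: "(\<And>x y. x \<in> A \<Longrightarrow> y \<in> A \<Longrightarrow> g x y = h x y) \<Longrightarrow> prod_pairs g A = prod_pairs h A"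
  unfolding prod_pairs_def by (auto intro!: prod.cong)

lemma prod_pairs_order_flip_superset:
  assumes "finite A" "S \<subseteq> A"
  shows "prod_pairs (order_flip s S) A = (prod_pairs (order_flip s S) S :: 'f::field)"
proof -
  have "prod_pairs (order_flip s S) A = (\<Prod>x\<in>A. \<Prod>y\<in>{y\<in>S. x < y}. order_flip s S x y)"
    unfolding prod_pairs_def using assms
    by (intro prod.cong refl prod.mono_neutral_right) (auto simp: order_flip_def)
  also have "\<dots> = (\<Prod>x\<in>S. \<Prod>y\<in>{y\<in>S. x < y}. order_flip s S x y)"
    using assms by (intro prod.mono_neutral_right) (auto simp: order_flip_def intro!: prod.neutral)
  finally show ?thesis by (simp add: prod_pairs_def)
qed

lemma inversion_sign_cong: "(\<And>x. x \<in> S \<Longrightarrow> s x = r x) \<Longrightarrow> inversion_sign s S = inversion_sign r S"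
  unfolding inversion_sign_def by (rule prod_pairs_cong) (auto simp: order_flip_def)

lemma inversion_sign_squared: "inversion_sign s S * inversion_sign s S = (1::'f::field)"
  unfolding inversion_sign_def prod_pairs_def prod.distrib[symmetric]
  by (intro prod.neutral ballI) (simp add: order_flip_def)

lemma sort_sign_map:
  assumes "distinct L" "inj_on s (set L \<union> S)"
  shows "(sort_sign (s ` S) (map s L) :: 'f::field) = sort_sign S L * prod_pairs (order_flip s S) (set L)"
  using assms
proof (induction L)
  case Nil then show ?case by (simp add: prod_pairs_def)
next
  case (Cons x L)
  have IH: "(sort_sign (s ` S) (map s L) :: 'f) = sort_sign S L * prod_pairs (order_flip s S) (set L)"
    using Cons by (auto intro: inj_on_subset)
  have "map (\<lambda>y. if s x \<in> s ` S \<and> y \<in> s ` S \<and> y < s x then -1 else (1::'f)) (map s L)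
      = map (\<lambda>y. (if x \<in> S \<and> y \<in> S \<and> y < x then -1 else 1) * order_flip s S x y) L"
    unfolding map_map o_def
  proof (rule map_cong[OF refl])
    fix y assume y: "y \<in> set L"
    have "x \<noteq> y" "s x \<noteq> s y" "s x \<in> s ` S \<longleftrightarrow> x \<in> S" "s y \<in> s ` S \<longleftrightarrow> y \<in> S"
      using Cons.prems y by (auto simp: inj_on_def)
    then show "(if s x \<in> s ` S \<and> s y \<in> s ` S \<and> s y < s x then -1 else (1::'f)) =
        (if x \<in> S \<and> y \<in> S \<and> y < x then -1 else 1) * order_flip s S x y"
      by (auto simp: order_flip_def linorder_neq_iff)
  qed
  moreover have "prod_list (map (order_flip s S x) L) = (\<Prod>y\<in>set L. order_flip s S x y :: 'f)"
    using Cons.prems by (simp add: prod.distinct_set_conv_list)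
  moreover have "prod_pairs (order_flip s S) (insert x (set L)) =
      (\<Prod>y\<in>set L. order_flip s S x y) * (prod_pairs (order_flip s S) (set L) :: 'f)"
    using Cons.prems order_flip_commute[of s S] by (intro prod_pairs_insert) (auto intro: inj_on_subset)
  ultimately show ?case
    by (simp add: IH prod_list_map_mult algebra_simps del: map_map)
qed

lemma sort_sign_map_inversion_sign:
  assumes "distinct L" "inj_on s (set L)" "S \<subseteq> set L"
  shows "(sort_sign (s ` S) (map s L) :: 'f::field) = sort_sign S L * inversion_sign s S"
proof -
  have "inj_on s (set L \<union> S)" using assms by (simp add: Un_absorb2)
  then have "(sort_sign (s ` S) (map s L) :: 'f) = sort_sign S L * prod_pairs (order_flip s S) (set L)"
    by (rule sort_sign_map[OF assms(1)])
  also have "prod_pairs (order_flip s S) (set L) = (prod_pairs (order_flip s S) S :: 'f)"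
    using assms(3) by (intro prod_pairs_order_flip_superset) auto
  finally show ?thesis by (simp add: inversion_sign_def)
qed

lemma sort_sign_nonzero: "(sort_sign S L :: 'f::field) \<noteq> 0"
  by (induction L) (auto simp: prod_list_zero_iff)

lemma inversion_sign_compose:
  assumes "finite S" "bij_betw t S S" "inj_on r S"
  shows "(inversion_sign (r \<circ> t) S :: 'f::field) = inversion_sign r S * inversion_sign t S"
proof -
  define L where "L = sorted_list_of_set S"
  have L: "distinct L" "set L = S" using assms(1) by (auto simp: L_def)
  have tS: "t ` S = S" "inj_on t S" using assms(2) by (auto simp: bij_betw_def)
  have "sort_sign S L * inversion_sign (r \<circ> t) S = (sort_sign ((r \<circ> t) ` S) (map (r \<circ> t) L) :: 'f)"
    using L tS assms(3) by (intro sort_sign_map_inversion_sign[symmetric]) (auto simp: comp_inj_on)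
  also have "\<dots> = sort_sign (r ` (t ` S)) (map r (map t L))"
    by (simp add: image_comp)
  also have "\<dots> = sort_sign (t ` S) (map t L) * inversion_sign r (t ` S)"
    using L tS assms(3) by (intro sort_sign_map_inversion_sign) (auto simp: distinct_map)
  also have "\<dots> = sort_sign S L * inversion_sign t S * inversion_sign r S"
    using L tS sort_sign_map_inversion_sign[of L t S, where 'f='f] by simp
  also have "\<dots> = sort_sign S L * (inversion_sign r S * inversion_sign t S)"
    by (simp add: algebra_simps)
  finally show ?thesis using sort_sign_nonzero[of S L] by (metis mult_left_cancel)
qed

lemma inversion_sign_id: "inversion_sign id S = 1"
  by (simp add: inversion_sign_def prod_pairs_def order_flip_def)

text \<open>The transposition of a < b inverts exactly the pair (a, b) and, for every c in between,
  the pairs (a, c) and (c, b): an odd number of pairs.\<close>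
lemma inversion_sign_transpose:
  assumes "finite S" "a \<in> S" "b \<in> S" "a < b"
  shows "(inversion_sign (Transposition.transpose a b) S :: 'f::field) = -1"
proof -
  let ?t = "Transposition.transpose a b"
  define P where "P = {(x, y). x \<in> S \<and> y \<in> S \<and> x < y}"
  define M where "M = {y \<in> S. a < y \<and> y < b}"
  define F where "F = insert (a, b) ((\<lambda>y. (a, y)) ` M \<union> (\<lambda>x. (x, b)) ` M)"
  have PS: "P = Sigma S (\<lambda>x. {y \<in> S. x < y})" by (auto simp: P_def)
  have finP: "finite P" unfolding PS using assms(1) by auto
  have FP: "F \<subseteq> P" using assms by (auto simp: F_def P_def M_def)
  have flip: "order_flip ?t S x y = (if (x, y) \<in> F then -1 else (1::'f))" if "(x, y) \<in> P" for x y
    using that assms unfolding order_flip_def F_def P_def M_def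
    by (auto simp: Transposition.transpose_def)
  have "(inversion_sign ?t S :: 'f) = (\<Prod>p\<in>P. order_flip ?t S (fst p) (snd p))"
    unfolding inversion_sign_def prod_pairs_def PS by (subst prod.Sigma) (auto simp: split_def assms(1))
  also have "\<dots> = (\<Prod>p\<in>P. if p \<in> F then -1 else (1::'f))"
    by (rule prod.cong) (auto simp: flip)
  also have "\<dots> = (-1) ^ card F"
    using finP FP by (simp add: prod.If_cases Int_absorb1[OF FP] Int_absorb2[OF FP])
  also have "card F = 1 + card M + card M"
  proof -
    have fM: "finite M" using assms(1) by (auto simp: M_def)
    have "card ((\<lambda>y. (a, y)) ` M \<union> (\<lambda>x. (x, b)) ` M) = card ((\<lambda>y. (a, y)) ` M) + card ((\<lambda>x. (x, b)) ` M)"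
      by (rule card_Un_disjoint) (use fM in \<open>auto simp: M_def\<close>)
    moreover have "card ((\<lambda>y. (a, y)) ` M) = card M" "card ((\<lambda>x. (x, b)) ` M) = card M"
      by (auto simp: card_image inj_on_def)
    moreover have "(a, b) \<notin> (\<lambda>y. (a, y)) ` M \<union> (\<lambda>x. (x, b)) ` M" by (auto simp: M_def)
    ultimately show ?thesis using fM by (simp add: F_def)
  qed
  finally show ?thesis by simp
qed

lemma inversion_sign_eq_sign:
  assumes "p permutes S" "finite S"
  shows "(inversion_sign p S :: 'f::field) = of_int (sign p)"
  using assms
proof (induction rule: permutes_induct)
  case id then show ?case by (simp add: inversion_sign_id[unfolded id_def])
next
  case (swap a b p)
  let ?t = "Transposition.transpose a b"
  have "?t = Transposition.transpose (min a b) (max a b)"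
    by (metis max.commute max_def min_def transpose_commute)
  moreover have "(inversion_sign (Transposition.transpose (min a b) (max a b)) S :: 'f) = -1"
    using swap assms by (intro inversion_sign_transpose) (auto simp: min_def max_def)
  ultimately have "(inversion_sign ?t S :: 'f) = -1" by simp
  moreover have "(inversion_sign (?t \<circ> p) S :: 'f) = inversion_sign ?t S * inversion_sign p S"
    using swap assms by (intro inversion_sign_compose) (auto simp: permutes_imp_bij)
  moreover have "sign (?t \<circ> p) = - sign p"
    using swap assms by (simp add: sign_compose permutes_imp_permutation sign_swap_id permutation_swap_id)
  ultimately show ?case using swap.IH by (simp only: mult_minus1 of_int_minus)
qed

lemma inversion_sign_eq_sign_on:
  assumes "s permutes A" "finite A" "S \<subseteq> A" "s ` S = S"
  shows "(inversion_sign s S :: 'f::field) = of_int (sign_on S s)"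
proof -
  have "bij_betw s S S" using assms permutes_inj_on[OF assms(1)]
    by (simp add: bij_betw_def inj_on_subset)
  then have "(inversion_sign (restrict_id s S) S :: 'f) = of_int (sign (restrict_id s S))"
    using assms finite_subset by (intro inversion_sign_eq_sign permutes_restrict_id) auto
  moreover have "inversion_sign s S = (inversion_sign (restrict_id s S) S :: 'f)"
    by (rule inversion_sign_cong) simp
  ultimately show ?thesis by (simp add: sign_on_def)
qed

section \<open>Evaluating multilinear polynomials in the Grassmann algebra\<close>

definition mono_sign :: "nat \<Rightarrow> nat set \<Rightarrow> (nat \<Rightarrow> nat) \<Rightarrow> 'f::field" where
  "mono_sign n S p = sort_sign S (map p [0..<n])"

text \<open>The coefficient of the index-ordered monomial with odd positions S once every monomial
  of q is reordered by the sign rule of G_t (see evalP_grass).\<close>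
definition ncoeff :: "nat \<Rightarrow> nat set \<Rightarrow> 'f::field mpoly \<Rightarrow> 'f" where
  "ncoeff n S q = (\<Sum>p | p permutes {..<n}. mono_sign n S p * q (S, p))"

definition ordered_eval :: "nat \<Rightarrow> nat set \<Rightarrow> (nat \<Rightarrow> 'f::field grass) \<Rightarrow> (nat \<Rightarrow> 'f grass) \<Rightarrow> 'f grass" where
  "ordered_eval n S b c = mprod gmul gone (map (\<lambda>i. if i \<in> S then c i else b i) [0..<n])"

definition vanish :: "nat \<Rightarrow> nat set set \<Rightarrow> 'f::field mpoly set" where
  "vanish n Z = {q \<in> Pgr n. \<forall>S\<in>Z. ncoeff n S q = 0}"

definition subsets_card :: "nat \<Rightarrow> nat set \<Rightarrow> nat set set" where
  "subsets_card n I = {S. S \<subseteq> {..<n} \<and> card S \<in> I}"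

lemma mmonos_eq: "mmonos n = Pow {..<n} \<times> {p. p permutes {..<n}}"
  by (auto simp: mmonos_def)

lemma finite_mmonos: "finite (mmonos n)"
  by (simp add: mmonos_eq finite_permutations)

lemma sort_map_permutes: "p permutes {..<n} \<Longrightarrow> sort (map p [0..<n]) = [0..<n]"
  by (rule sorted_distinct_set_unique)
     (auto simp: permutes_inj_on distinct_map atLeast0LessThan permutes_image)

lemma ordered_eval_props:
  assumes "\<And>i. b i \<in> grass0 t" "\<And>i. c i \<in> grass1 t" "S \<subseteq> {..<n}"
  shows "ordered_eval n S b c \<in> grass t \<and> homogeneous (ordered_eval n S b c) (odd (card S))
    \<and> deg_ge (card S) (ordered_eval n S b c)"
proof -
  have "{i. i \<in> S} \<inter> set [0..<n] = S" using assms(3) by auto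
  then have "length (filter (\<lambda>i. i \<in> S) [0..<n]) = card S" by (simp add: distinct_length_filter)
  moreover note mprod_homogeneous[of "[0..<n]" "\<lambda>i. if i \<in> S then c i else b i" t S]
  ultimately show ?thesis using assms(1,2) by (simp add: ordered_eval_def grass0_iff grass1_iff)
qed

lemma evalP_grass:
  assumes "\<And>i. b i \<in> grass0 t" "\<And>i. c i \<in> grass1 t"
  shows "evalP gmul gone gsmul n q b c = (\<Sum>S\<in>Pow {..<n}. gsmul (ncoeff n S q) (ordered_eval n S b c))"
proof -
  have sorted_monomial: "mprod gmul gone (map (\<lambda>j. if p j \<in> S then c (p j) else b (p j)) [0..<n])
      = gsmul (mono_sign n S p) (ordered_eval n S b c)" if p: "p permutes {..<n}" for S p
  proof -
    have "mprod gmul gone (map (\<lambda>i. if i \<in> S then c i else b i) (map p [0..<n])) =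
        gsmul (sort_sign S (map p [0..<n])) (mprod gmul gone (map (\<lambda>i. if i \<in> S then c i else b i) (sort (map p [0..<n]))))"
      using assms permutes_inj_on[OF p]
      by (intro mprod_sort[where t=t]) (auto simp: distinct_map atLeast0LessThan grass0_iff grass1_iff)
    then show ?thesis by (simp add: sort_map_permutes[OF p] mono_sign_def ordered_eval_def o_def)
  qed
  have "evalP gmul gone gsmul n q b c = (\<Sum>(S, p)\<in>Pow {..<n} \<times> {p. p permutes {..<n}}.
      gsmul (mono_sign n S p * q (S, p)) (ordered_eval n S b c))"
    unfolding evalP_def mmonos_eq by (intro sum.cong) (auto simp: sorted_monomial mult.commute)
  also have "\<dots> = (\<Sum>S\<in>Pow {..<n}. gsmul (ncoeff n S q) (ordered_eval n S b c))"
    by (simp add: sum.cartesian_product[symmetric] ncoeff_def gsmul_sum_left)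
  finally show ?thesis .
qed

definition rank_in :: "nat set \<Rightarrow> nat \<Rightarrow> nat" where
  "rank_in S i = card {s \<in> S. s \<le> i}"

lemma strict_mono_on_rank_in: "finite S \<Longrightarrow> strict_mono_on S (rank_in S)"
proof (rule strict_mono_onI)
  fix i j assume "finite S" "j \<in> S" "i < j"
  then have "{s \<in> S. s \<le> i} \<subseteq> {s \<in> S. s \<le> j}" "j \<in> {s \<in> S. s \<le> j} - {s \<in> S. s \<le> i}"
    by auto
  then have "{s \<in> S. s \<le> i} \<subset> {s \<in> S. s \<le> j}" by blast
  then show "rank_in S i < rank_in S j"
    unfolding rank_in_def using \<open>finite S\<close> by (intro psubset_card_mono) auto
qed

lemma rank_in_image: "finite S \<Longrightarrow> rank_in S ` S = {1..card S}"
proof (rule card_subset_eq)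
  assume S: "finite S"
  show "rank_in S ` S \<subseteq> {1..card S}"
    using S by (auto simp: rank_in_def Suc_le_eq card_gt_0_iff intro!: card_mono)
  show "card (rank_in S ` S) = card {1..card S}"
    using strict_mono_on_imp_inj_on[OF strict_mono_on_rank_in[OF S]] by (simp add: card_image)
qed simp

text \<open>Substituting 1 for the even variables outside S0, the generators e_1, e_2, \<dots> in
  increasing order for the odd variables in S0, and 0 for all other variables kills every
  ordered product except the one with odd positions S0.\<close>
definition test_even :: "nat set \<Rightarrow> nat \<Rightarrow> 'f::field grass" where
  "test_even S0 i = (if i \<in> S0 then 0 else gone)"

definition test_odd :: "nat set \<Rightarrow> nat \<Rightarrow> 'f::field grass" where
  "test_odd S0 i = (if i \<in> S0 then gmonom {rank_in S0 i} else 0)"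

lemma test_even_grass0: "test_even S0 i \<in> grass0 t"
  by (auto simp: test_even_def grass0_def grass_def gone_def)

lemma test_odd_grass1:
  assumes "finite S0" "card S0 \<le> t"
  shows "test_odd S0 i \<in> grass1 t"
proof -
  have "rank_in S0 i \<in> {1..t}" if "i \<in> S0"
    using rank_in_image[OF assms(1)] imageI[OF that, of "rank_in S0"] assms(2) by auto
  then show ?thesis by (auto simp: test_odd_def grass1_def grass_def gmonom_def)
qed

lemma test_values_graded:
  assumes "S0 \<subseteq> {..<n}" "card S0 \<le> t"
  shows "\<forall>i. test_even S0 i \<in> grass0 t" "\<forall>i. test_odd S0 i \<in> grass1 t"
  using assms finite_subset[OF assms(1)] by (simp_all add: test_even_grass0 test_odd_grass1)

lemma ordered_eval_test:
  assumes "S \<subseteq> {..<n}" "S0 \<subseteq> {..<n}"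
  shows "ordered_eval n S (test_even S0) (test_odd S0) = (if S = S0 then gmonom {1..card S0} else (0 :: 'f::field grass))"
proof (cases "S = S0")
  case True
  have "finite S0" using assms(2) finite_subset by auto
  moreover have "set [0..<n] \<inter> S0 = S0" using assms(2) by auto
  ultimately show ?thesis
    using True mprod_gmonoms[OF _ _ strict_mono_on_rank_in, of "[0..<n]" S0, where 'f='f]
    by (simp add: ordered_eval_def test_even_def test_odd_def rank_in_image if_distrib cong: if_cong)
next
  case False
  then obtain j where j: "j < n" "(j \<in> S \<and> j \<notin> S0) \<or> (j \<in> S0 \<and> j \<notin> S)"
    using assms by blast
  then have "0 \<in> set (map (\<lambda>i. if i \<in> S then test_odd S0 i else (test_even S0 i :: 'f grass)) [0..<n])"
    by (force simp: test_even_def test_odd_def)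
  then show ?thesis using False by (simp add: ordered_eval_def mprod_zero)
qed

lemma evalP_test:
  assumes "S0 \<subseteq> {..<n}"
  shows "evalP gmul gone gsmul n q (test_even S0) (test_odd S0) = gsmul (ncoeff n S0 q) (gmonom {1..card S0} :: 'f::field grass)"
proof -
  have "evalP gmul gone gsmul n q (test_even S0) (test_odd S0)
      = (\<Sum>S\<in>Pow {..<n}. gsmul (ncoeff n S q) (ordered_eval n S (test_even S0) (test_odd S0)))"
    using test_values_graded[OF assms order.refl] by (intro evalP_grass[where t="card S0"]) auto
  also have "\<dots> = (\<Sum>S\<in>Pow {..<n}. if S = S0 then gsmul (ncoeff n S0 q) (gmonom {1..card S0}) else 0)"
    using assms by (intro sum.cong refl) (simp add: ordered_eval_test)
  finally show ?thesis using assms by (simp add: sum.delta')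
qed

lemma ordered_eval_eq_0:
  assumes "\<And>i. b i \<in> grass0 t" "\<And>i. c i \<in> grass1 t" "S \<subseteq> {..<n}" "t < card S"
  shows "ordered_eval n S b c = 0"
  using ordered_eval_props[OF assms(1-3)] assms(4) by (intro grass_deg_ge_eq_0[of _ t "card S"]) auto

lemma IdP_grass_subset_vanish:
  "IdP gmul gone gsmul (grass0 t) (grass1 t) n \<subseteq> (vanish n (subsets_card n {..t}) :: 'f::field mpoly set)"
proof
  fix q :: "'f mpoly"
  assume q: "q \<in> IdP gmul gone gsmul (grass0 t) (grass1 t) n"
  have "ncoeff n S0 q = 0" if S0: "S0 \<subseteq> {..<n}" "card S0 \<le> t" for S0
  proof -
    have "evalP gmul gone gsmul n q (test_even S0) (test_odd S0) = 0"
      using q test_values_graded[OF S0] unfolding IdP_def by blast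
    then have "gsmul (ncoeff n S0 q) (gmonom {1..card S0} :: 'f grass) {1..card S0} = 0"
      using evalP_test[OF S0(1), of q] by simp
    then show ?thesis by (simp add: gsmul_def gmonom_def)
  qed
  then show "q \<in> vanish n (subsets_card n {..t})"
    using q by (auto simp: vanish_def IdP_def subsets_card_def)
qed

lemma vanish_subset_IdP_grass:
  "(vanish n (subsets_card n {..t}) :: 'f::field mpoly set) \<subseteq> IdP gmul gone gsmul (grass0 t) (grass1 t) n"
proof
  fix q :: "'f mpoly"
  assume q: "q \<in> vanish n (subsets_card n {..t})"
  have "evalP gmul gone gsmul n q b c = 0" if bc: "\<forall>i. b i \<in> grass0 t" "\<forall>i. c i \<in> grass1 t" for b c
  proof -
    have "gsmul (ncoeff n S q) (ordered_eval n S b c) = 0" if S: "S \<subseteq> {..<n}" for S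
      using q S bc ordered_eval_eq_0[of b t c S n]
      by (cases "card S \<le> t") (auto simp: vanish_def subsets_card_def)
    then show ?thesis using bc by (simp add: evalP_grass[where t=t])
  qed
  then show "q \<in> IdP gmul gone gsmul (grass0 t) (grass1 t) n"
    using q unfolding vanish_def IdP_def by blast
qed

lemma IdP_grass_eq:
  "IdP gmul gone gsmul (grass0 t) (grass1 t) n = (vanish n (subsets_card n {..t}) :: 'f::field mpoly set)"
  by (intro equalityI IdP_grass_subset_vanish vanish_subset_IdP_grass)

lemma homogeneous_gmonom: "homogeneous (gmonom A) (odd (card A))"
  by (simp add: homogeneous_def gmonom_def)

text \<open>An odd monomial anticommutes with every generator outside it.\<close>
lemma gsmul_gmonom_odd_central_imp_0:
  assumes central: "gsmul a (gmonom A) \<in> center (grass t) gmul"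
    and A: "finite A" "odd (card A)" and j: "j \<in> {1..t}" "j \<notin> A"
  shows "(a :: 'f::field_char_0) = 0"
proof -
  define x where "x = gmul (gsmul a (gmonom A)) (gmonom {j})"
  have "gmonom {j} \<in> grass t" using j by (auto simp: grass_def gmonom_def)
  then have "x = gmul (gmonom {j}) (gsmul a (gmonom A))"
    using central by (auto simp: center_def x_def)
  also have "\<dots> = gsmul (-1) x"
  proof -
    have "gmul (gmonom {j}) (gmonom A) = gsmul (-1) (gmul (gmonom A) (gmonom {j}) :: 'f grass)"
      using gmul_homogeneous_commute[OF homogeneous_gmonom homogeneous_gmonom, of "{j}" A] A(2) by simp
    then show ?thesis by (simp add: x_def gmul_gsmul_left gmul_gsmul_right)
  qed
  finally have "x (A \<union> {j}) = gsmul (-1) x (A \<union> {j})" by (rule fun_cong)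
  then have "x (A \<union> {j}) = - x (A \<union> {j})" by (simp add: gsmul_def)
  then have "x (A \<union> {j}) + x (A \<union> {j}) = 0" by (simp add: eq_neg_iff_add_eq_0)
  then have "x (A \<union> {j}) = 0" by (simp flip: mult_2)
  moreover have "gmul (gmonom A) (gmonom {j}) = gsmul (gsign A {j}) (gmonom (A \<union> {j}) :: 'f grass)"
    using A j by (intro gmul_gmonom) auto
  then have "x = gsmul a (gsmul (gsign A {j}) (gmonom (A \<union> {j})))"
    by (simp add: x_def gmul_gsmul_left)
  then have "x (A \<union> {j}) = a * gsign A {j}" by (simp add: gsmul_def gmonom_def)
  moreover have "(gsign A {j} :: 'f) \<noteq> 0"
    by (metis gsign_squared mult_zero_left zero_neq_one)
  ultimately show ?thesis by simp
qed

lemma ordered_eval_commute: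
  assumes "\<And>i. b i \<in> grass0 t" "\<And>i. c i \<in> grass1 t" "S \<subseteq> {..<n}"
    and "\<not> (odd (card S) \<and> card S < t)" "y \<in> grass t"
  shows "gmul (ordered_eval n S b c) y = gmul y (ordered_eval n S b c)"
proof -
  have props: "ordered_eval n S b c \<in> grass t" "homogeneous (ordered_eval n S b c) (odd (card S))"
    "deg_ge (card S) (ordered_eval n S b c)"
    using ordered_eval_props[of b t c S n] assms(1-3) by auto
  show ?thesis
  proof (cases "odd (card S)")
    case False
    then show ?thesis using props(2) by (simp add: gmul_even_commute)
  next
    case True
    then have "deg_ge t (ordered_eval n S b c)"
      using deg_ge_mono[OF props(3), of t] assms(4) by simp
    then show ?thesis using props(1) assms(5) by (simp add: gmul_top_degree_commute)
  qed
qed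

lemma CP_grass_subset_vanish:
  "CP gmul gone gsmul (grass t) (grass0 t) (grass1 t) n
     \<subseteq> (vanish n (subsets_card n {i. odd i \<and> i < t}) :: 'f::field_char_0 mpoly set)"
proof
  fix q :: "'f mpoly"
  assume q: "q \<in> CP gmul gone gsmul (grass t) (grass0 t) (grass1 t) n"
  have "ncoeff n S0 q = 0" if S0: "S0 \<subseteq> {..<n}" "odd (card S0)" "card S0 < t" for S0
  proof -
    have "evalP gmul gone gsmul n q (test_even S0) (test_odd S0) \<in> center (grass t) gmul"
      using q test_values_graded[OF S0(1) less_imp_le[OF S0(3)]] unfolding CP_def by blast
    then have "gsmul (ncoeff n S0 q) (gmonom {1..card S0}) \<in> center (grass t) gmul"
      using evalP_test[OF S0(1), of q] by (simp only:)
    then show ?thesis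
      using S0 by (elim gsmul_gmonom_odd_central_imp_0[where j="Suc (card S0)"]) auto
  qed
  then show "q \<in> vanish n (subsets_card n {i. odd i \<and> i < t})"
    using q by (auto simp: vanish_def CP_def subsets_card_def)
qed

lemma vanish_subset_CP_grass:
  "(vanish n (subsets_card n {i. odd i \<and> i < t}) :: 'f::field_char_0 mpoly set)
     \<subseteq> CP gmul gone gsmul (grass t) (grass0 t) (grass1 t) n"
proof
  fix q :: "'f mpoly"
  assume q: "q \<in> vanish n (subsets_card n {i. odd i \<and> i < t})"
  have "evalP gmul gone gsmul n q b c \<in> center (grass t) gmul"
    if bc: "\<forall>i. b i \<in> grass0 t" "\<forall>i. c i \<in> grass1 t" for b c
  proof -
    let ?f = "\<lambda>S. gsmul (ncoeff n S q) (ordered_eval n S b c)"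
    have f_grass: "?f S \<in> grass t" if "S \<subseteq> {..<n}" for S
      using ordered_eval_props[of b t c S n] bc that by (simp add: gsmul_grass)
    have f_commute: "gmul (?f S) y = gmul y (?f S)" if "S \<subseteq> {..<n}" "y \<in> grass t" for S y
      using q that ordered_eval_commute[of b t c S n y] bc
      by (cases "odd (card S) \<and> card S < t")
         (simp_all add: vanish_def subsets_card_def gmul_gsmul_left gmul_gsmul_right)
    show ?thesis
      unfolding evalP_grass[OF bc[rule_format]] center_def
      by (auto simp: gmul_sum_left gmul_sum_right f_commute intro!: sum_grass f_grass sum.cong)
  qed
  then show "q \<in> CP gmul gone gsmul (grass t) (grass0 t) (grass1 t) n"
    using q by (simp add: vanish_def CP_def)
qed

lemma CP_grass_eq:
  "CP gmul gone gsmul (grass t) (grass0 t) (grass1 t) n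
     = (vanish n (subsets_card n {i. odd i \<and> i < t}) :: 'f::field_char_0 mpoly set)"
  by (intro equalityI CP_grass_subset_vanish vanish_subset_CP_grass)

section \<open>Traces of linear maps on finite-dimensional subspaces\<close>

context vector_space
begin

lemma trace_basis_indep:
  assumes B: "independent B" "span B = W" "finite B"
    and B': "independent B'" "span B' = W" "finite B'"
    and T: "module_hom scale scale T" "T ` W \<subseteq> W"
  shows "(\<Sum>b\<in>B. representation B (T b) b) = (\<Sum>b\<in>B'. representation B' (T b) b)"
proof -
  have BW: "B \<subseteq> W" "B' \<subseteq> W" using B(2) B'(2) span_superset by auto
  let ?r = "representation B'" and ?q = "representation B"
  have change_B: "?q (T b) b = (\<Sum>b'\<in>B'. ?r b b' * ?q (T b') b)" if b: "b \<in> B" for b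
  proof -
    have "(\<Sum>b'\<in>B'. ?r b b' *s b') = b"
      using B' BW b by (intro sum_representation_eq) auto
    then have "T b = T (\<Sum>b'\<in>B'. ?r b b' *s b')" by simp
    also have "\<dots> = (\<Sum>b'\<in>B'. ?r b b' *s T b')"
      by (simp add: module_hom.sum[OF T(1)] module_hom.scale[OF T(1)])
    finally have "?q (T b) b = ?q (\<Sum>b'\<in>B'. ?r b b' *s T b') b" by simp
    also have "\<dots> = (\<Sum>b'\<in>B'. ?q (?r b b' *s T b') b)"
      using B BW T(2) by (subst representation_sum) (auto simp: image_subset_iff intro!: span_scale)
    also have "\<dots> = (\<Sum>b'\<in>B'. ?r b b' * ?q (T b') b)"
      using B BW T(2) by (intro sum.cong refl) (auto simp: image_subset_iff representation_scale)
    finally show ?thesis .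
  qed
  have change_B': "(\<Sum>b\<in>B. ?q (T b') b * ?r b b') = ?r (T b') b'" if b': "b' \<in> B'" for b'
  proof -
    have "T b' \<in> span B" using B BW T(2) b' by auto
    then have "(\<Sum>b\<in>B. ?q (T b') b *s b) = T b'"
      using B by (intro sum_representation_eq) auto
    then have "?r (T b') b' = ?r (\<Sum>b\<in>B. ?q (T b') b *s b) b'" by simp
    also have "\<dots> = (\<Sum>b\<in>B. ?r (?q (T b') b *s b) b')"
      using B' BW by (subst representation_sum) (auto intro: span_scale)
    also have "\<dots> = (\<Sum>b\<in>B. ?q (T b') b * ?r b b')"
      using B' BW by (intro sum.cong refl) (auto simp: representation_scale)
    finally show ?thesis by simp
  qed
  have "(\<Sum>b\<in>B. ?q (T b) b) = (\<Sum>b\<in>B. \<Sum>b'\<in>B'. ?r b b' * ?q (T b') b)"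
    by (simp add: change_B)
  also have "\<dots> = (\<Sum>b'\<in>B'. \<Sum>b\<in>B. ?q (T b') b * ?r b b')"
    by (subst sum.swap) (simp add: mult.commute)
  also have "\<dots> = (\<Sum>b'\<in>B'. ?r (T b') b')"
    by (simp add: change_B')
  finally show ?thesis .
qed

text \<open>Invariance of span B makes the diagonal entries at B independent of the extension C.\<close>
lemma trace_basis_Un:
  assumes "independent (B \<union> C)" "finite B" "finite C" "B \<inter> C = {}" "T ` span B \<subseteq> span B"
  shows "(\<Sum>v\<in>B \<union> C. representation (B \<union> C) (T v) v) =
    (\<Sum>v\<in>B. representation B (T v) v) + (\<Sum>v\<in>C. representation (B \<union> C) (T v) v)"
proof -
  have "representation (B \<union> C) (T v) v = representation B (T v) v" if "v \<in> B" for v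
  proof -
    have "T v \<in> span B" using that assms(5) span_base by blast
    then show ?thesis by (simp add: representation_extend[OF assms(1) _ Un_upper1])
  qed
  then show ?thesis using assms(1-4) by (simp add: sum.union_disjoint)
qed

end

interpretation pv: vector_space "pscale :: 'f::field \<Rightarrow> 'f mpoly \<Rightarrow> 'f mpoly"
  by unfold_locales (auto simp: pscale_def fun_eq_iff algebra_simps)

lemma Pgr_subset_span_monomials: "Pgr n \<subseteq> pv.span ((\<lambda>m x. if x = m then 1 else 0) ` mmonos n :: 'f::field mpoly set)"
proof
  fix p :: "'f mpoly" assume p: "p \<in> Pgr n"
  have "p = (\<Sum>m\<in>mmonos n. pscale (p m) (\<lambda>x. if x = m then 1 else 0))"
  proof
    fix x
    have "(\<Sum>m\<in>mmonos n. pscale (p m) (\<lambda>x. if x = m then 1 else 0)) x = (\<Sum>m\<in>mmonos n. if x = m then p x else 0)"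
      by (auto simp: sum_fun_apply pscale_def intro!: sum.cong)
    also have "\<dots> = p x"
      using p finite_mmonos[of n] by (cases x) (auto simp: Pgr_def)
    finally show "p x = (\<Sum>m\<in>mmonos n. pscale (p m) (\<lambda>x. if x = m then 1 else 0)) x" by simp
  qed
  also have "\<dots> \<in> pv.span ((\<lambda>m x. if x = m then 1 else 0) ` mmonos n)"
    by (intro pv.span_sum pv.span_scale pv.span_base) auto
  finally show "p \<in> pv.span ((\<lambda>m x. if x = m then 1 else 0) ` mmonos n)" .
qed

lemma independent_Pgr_finite:
  assumes "pv.independent B" "B \<subseteq> Pgr n"
  shows "finite (B :: 'f::field mpoly set)"
proof -
  have "B \<subseteq> pv.span ((\<lambda>m x. if x = m then 1 else 0) ` mmonos n)"
    using assms(2) Pgr_subset_span_monomials by blast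
  then show ?thesis
    using pv.independent_span_bound[OF finite_imageI[OF finite_mmonos] assms(1)] by blast
qed

lemma basis_Pgr_subspace_exists:
  assumes "pv.subspace W" "W \<subseteq> Pgr n"
  obtains B where "B \<subseteq> W" "pv.independent B" "pv.span B = (W :: 'f::field mpoly set)" "finite B"
proof -
  obtain B where B: "B \<subseteq> W" "pv.independent B" "W \<subseteq> pv.span B" "card B = pv.dim W"
    by (rule pv.basis_exists)
  then have "pv.span B = W" using pv.span_minimal[OF B(1) assms(1)] by auto
  moreover have "finite B" using independent_Pgr_finite[OF B(2)] B(1) assms(2) by blast
  ultimately show ?thesis using that B by blast
qed

lemma trace_on_eq_basis:
  assumes B: "pv.independent B" "pv.span B = W" and W: "W \<subseteq> Pgr n"
    and T: "module_hom pscale pscale T" "T ` W \<subseteq> W"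
  shows "trace_on W T = (\<Sum>b\<in>B. pv.representation B (T b) b :: 'f::field)"
proof -
  define B0 where "B0 = (SOME B. B \<subseteq> W \<and> pv.independent B \<and> pv.span B = W)"
  have "pv.subspace W" using B(2) pv.subspace_span by blast
  then have "\<exists>B. B \<subseteq> W \<and> pv.independent B \<and> pv.span B = W"
    using basis_Pgr_subspace_exists[OF _ W] by metis
  then have B0: "B0 \<subseteq> W" "pv.independent B0" "pv.span B0 = W"
    unfolding B0_def by (metis (mono_tags, lifting) someI_ex)+
  have "B \<subseteq> W" using B(2) pv.span_superset by blast
  then have "finite B0" "finite B"
    using independent_Pgr_finite B0 B(1) W by (meson order.trans)+
  then show ?thesis
    unfolding trace_on_def Let_def B0_def[symmetric]
    using B0 B T by (intro pv.trace_basis_indep) auto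
qed

lemma ncoeff_add: "ncoeff n S (p + q) = ncoeff n S p + ncoeff n S q"
  and ncoeff_diff: "ncoeff n S (p - q) = ncoeff n S p - ncoeff n S q"
  and ncoeff_pscale: "ncoeff n S (pscale c p) = c * ncoeff n S p"
  by (simp_all add: ncoeff_def pscale_def sum.distrib sum_subtractf sum_distrib_left algebra_simps)

lemma ncoeff_zero [simp]: "ncoeff n S 0 = 0"
  by (simp add: ncoeff_def)

lemma ncoeff_sum: "ncoeff n S (\<Sum>i\<in>I. f i) = (\<Sum>i\<in>I. ncoeff n S (f i))"
  by (simp add: ncoeff_def sum_fun_apply sum_distrib_left sum_distrib_right sum.swap[of _ I])

lemma ncoeff_span_eq_0:
  assumes "\<And>x. x \<in> X \<Longrightarrow> ncoeff n S x = 0" "y \<in> pv.span X"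
  shows "ncoeff n S y = (0::'f::field)"
proof -
  have "pv.subspace {y. ncoeff n S y = (0::'f)}"
    by (rule pv.subspaceI) (auto simp: ncoeff_add ncoeff_pscale)
  then have "pv.span X \<subseteq> {y. ncoeff n S y = (0::'f)}"
    using assms(1) by (intro pv.span_minimal) auto
  then show ?thesis using assms(2) by auto
qed

lemma subspace_vanish: "pv.subspace (vanish n Z :: 'f::field mpoly set)"
proof (rule pv.subspaceI)
  show "pscale c x \<in> vanish n Z" if "x \<in> vanish n Z" for c x
    using that by (auto simp: vanish_def Pgr_def ncoeff_pscale) (simp add: pscale_def)
qed (auto simp: vanish_def Pgr_def ncoeff_add)

lemma basis_vanish_exists:
  obtains B where "B \<subseteq> vanish n Z" "pv.independent B" "pv.span B = (vanish n Z :: 'f::field mpoly set)" "finite B"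
proof -
  have "vanish n Z \<subseteq> Pgr n" by (auto simp: vanish_def)
  then show ?thesis using basis_Pgr_subspace_exists[OF subspace_vanish] that by blast
qed

lemma vanish_empty: "vanish n {} = Pgr n"
  by (simp add: vanish_def)

lemma vanish_antimono: "Z \<subseteq> Z' \<Longrightarrow> vanish n Z' \<subseteq> vanish n Z"
  by (auto simp: vanish_def)

lemma subsets_card_mono: "I \<subseteq> I' \<Longrightarrow> subsets_card n I \<subseteq> subsets_card n I'"
  and subsets_card_Pow: "subsets_card n I \<subseteq> Pow {..<n}"
  and subsets_card_diff: "subsets_card n I' - subsets_card n I = subsets_card n (I' - I)"
  by (auto simp: subsets_card_def)

definition signed_sum :: "nat \<Rightarrow> nat set \<Rightarrow> 'f::field mpoly" where
  "signed_sum n S = (\<lambda>(S', p). if S' = S \<and> p permutes {..<n} then mono_sign n S p else 0)"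

lemma sort_sign_squared: "sort_sign S L * sort_sign S L = (1::'f::field)"
proof (induction L)
  case (Cons x L)
  let ?h = "\<lambda>y. if x \<in> S \<and> y \<in> S \<and> y < x then -1 else (1::'f)"
  have "prod_list (map ?h L) * prod_list (map ?h L) = 1"
    by (simp add: prod_list_map_mult[symmetric] prod_list_map_eq_1)
  then show ?case using Cons by (simp add: algebra_simps)
qed simp

lemma ncoeff_signed_sum:
  "ncoeff n S' (signed_sum n S) = (if S' = S then of_nat (fact n) else (0::'f::field))"
proof (cases "S' = S")
  case True
  have "ncoeff n S (signed_sum n S) = (\<Sum>p | p permutes {..<n}. (1::'f))"
    unfolding ncoeff_def by (rule sum.cong) (auto simp: signed_sum_def mono_sign_def sort_sign_squared)
  then show ?thesis using True by (simp add: card_permutations)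
qed (simp add: ncoeff_def signed_sum_def)

lemma signed_sum_vanish:
  assumes "S \<subseteq> {..<n}" "S \<notin> Z"
  shows "signed_sum n S \<in> (vanish n Z :: 'f::field mpoly set)"
proof -
  have "signed_sum n S \<in> (Pgr n :: 'f mpoly set)"
    using assms(1) by (auto simp: Pgr_def mmonos_def signed_sum_def)
  then show ?thesis using assms(2) by (auto simp: vanish_def ncoeff_signed_sum)
qed

lemma signed_sum_notin_vanish:
  "S \<in> Z \<Longrightarrow> signed_sum n S \<notin> (vanish n Z :: 'f::field_char_0 mpoly set)"
  by (auto simp: vanish_def ncoeff_signed_sum)

lemma inj_signed_sum: "inj (signed_sum n :: nat set \<Rightarrow> 'f::field_char_0 mpoly)"
proof (rule injI)
  fix S T assume "(signed_sum n S :: 'f mpoly) = signed_sum n T"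
  then have "ncoeff n S (signed_sum n S) = (ncoeff n S (signed_sum n T) :: 'f)" by simp
  then show "S = T" by (simp add: ncoeff_signed_sum split: if_splits)
qed

lemma independent_Un_signed_sums:
  assumes "B \<subseteq> vanish n Z" "pv.independent B" "finite Y" "Y \<subseteq> Z"
  shows "pv.independent (B \<union> signed_sum n ` Y :: 'f::field_char_0 mpoly set)"
  using assms(3,4)
proof (induction Y rule: finite_induct)
  case (insert T Y)
  have "signed_sum n T \<notin> pv.span (B \<union> signed_sum n ` Y :: 'f mpoly set)"
  proof
    assume "signed_sum n T \<in> pv.span (B \<union> signed_sum n ` Y :: 'f mpoly set)"
    moreover have "ncoeff n T x = (0::'f)" if "x \<in> B \<union> signed_sum n ` Y" for x
      using that assms(1) insert by (auto simp: vanish_def ncoeff_signed_sum)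
    ultimately have "ncoeff n T (signed_sum n T) = (0::'f)" by (rule ncoeff_span_eq_0[rotated])
    then show False by (simp add: ncoeff_signed_sum)
  qed
  then show ?case using insert pv.independent_insertI by auto
qed (use assms in simp)

text \<open>Subtracting suitable multiples of the signed sums kills the coefficients at Z' - Z and
  lands in vanish n Z'.\<close>
lemma span_Un_signed_sums:
  assumes Z: "Z \<subseteq> Z'" "Z' \<subseteq> Pow {..<n}" and B: "pv.span B = vanish n Z'"
  shows "pv.span (B \<union> signed_sum n ` (Z' - Z)) = (vanish n Z :: 'f::field_char_0 mpoly set)"
proof
  have "B \<subseteq> vanish n Z" using B pv.span_superset vanish_antimono[OF Z(1)] by blast
  moreover have "signed_sum n ` (Z' - Z) \<subseteq> vanish n Z" using Z by (auto intro: signed_sum_vanish)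
  ultimately show "pv.span (B \<union> signed_sum n ` (Z' - Z)) \<subseteq> vanish n Z"
    by (intro pv.span_minimal subspace_vanish) auto
next
  show "vanish n Z \<subseteq> pv.span (B \<union> signed_sum n ` (Z' - Z))"
  proof
    fix p :: "'f mpoly" assume p: "p \<in> vanish n Z"
    have finZ: "finite (Z' - Z)" using Z(2) by (auto intro: finite_subset)
    define r where "r = (\<Sum>T\<in>Z' - Z. pscale (ncoeff n T p / of_nat (fact n)) (signed_sum n T :: 'f mpoly))"
    have ncoeff_r: "ncoeff n S r = (if S \<in> Z' - Z then ncoeff n S p else 0)" for S
      using finZ by (simp add: r_def ncoeff_sum ncoeff_pscale ncoeff_signed_sum if_distrib sum.delta cong: if_cong)
    have "r \<in> Pgr n"
      unfolding r_def vanish_empty[symmetric] using Z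
      by (intro pv.subspace_sum[OF subspace_vanish] pv.subspace_scale[OF subspace_vanish] signed_sum_vanish) auto
    then have "p - r \<in> vanish n Z'"
      using p ncoeff_r vanish_antimono[of "{}" Z n]
      by (auto simp: vanish_def ncoeff_diff Pgr_def)
    then have "p - r \<in> pv.span (B \<union> signed_sum n ` (Z' - Z))"
      using B pv.span_mono[of B] by blast
    moreover have "r \<in> pv.span (B \<union> signed_sum n ` (Z' - Z))"
      unfolding r_def by (intro pv.span_sum pv.span_scale pv.span_base) auto
    ultimately show "p \<in> pv.span (B \<union> signed_sum n ` (Z' - Z))"
      using pv.span_add by fastforce
  qed
qed

lemma dim_vanish:
  assumes "Z \<subseteq> Z'" "Z' \<subseteq> Pow {..<n}"
  shows "pv.dim (vanish n Z :: 'f::field_char_0 mpoly set) = pv.dim (vanish n Z' :: 'f mpoly set) + card (Z' - Z)"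
proof -
  obtain B :: "'f mpoly set" where B: "B \<subseteq> vanish n Z'" "pv.independent B" "pv.span B = vanish n Z'" "finite B"
    by (rule basis_vanish_exists)
  have finZ: "finite (Z' - Z)" using assms(2) by (auto intro: finite_subset)
  have disj: "B \<inter> signed_sum n ` (Z' - Z) = {}"
    using B(1) signed_sum_notin_vanish[of _ Z' n] by auto
  have "pv.dim (vanish n Z :: 'f mpoly set) = card (B \<union> signed_sum n ` (Z' - Z))"
    using span_Un_signed_sums[OF assms B(3)] independent_Un_signed_sums[OF B(1,2) finZ]
    by (metis Diff_subset pv.dim_span_eq_card_independent)
  also have "\<dots> = card B + card (Z' - Z)"
    using B(4) finZ disj by (simp add: card_Un_disjoint card_image inj_on_subset[OF inj_signed_sum])
  finally show ?thesis using B pv.dim_span_eq_card_independent by metis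
qed

section \<open>The action of the hyperoctahedral group\<close>

lemma mono_sign_compose:
  assumes "s permutes {..<n}" "p permutes {..<n}" "S \<subseteq> {..<n}"
  shows "mono_sign n (s ` S) (s \<circ> p) = mono_sign n S p * (inversion_sign s S :: 'f::field)"
proof -
  have "distinct (map p [0..<n])" "set (map p [0..<n]) = {..<n}"
    using permutes_inj_on[OF assms(2)] permutes_image[OF assms(2)] by (auto simp: distinct_map atLeast0LessThan)
  then show ?thesis
    using permutes_inj_on[OF assms(1)] assms(3)
    by (simp add: mono_sign_def sort_sign_map_inversion_sign flip: map_map)
qed

lemma permutes_image_inv_image:
  assumes "s permutes {..<n}"
  shows "s ` (inv s ` X) = X" "inv s ` (s ` X) = X"
  using permutes_inv_o[OF assms] by (simp_all add: image_comp)

lemma act_module_hom: "module_hom pscale pscale (act a s n :: 'f::field mpoly \<Rightarrow> _)"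
  by (simp add: module_hom_def module_iff_vector_space pv.vector_space_axioms module_hom_axioms_def
      act_def pscale_def fun_eq_iff algebra_simps split: prod.splits)

lemma act_Pgr: "act a s n p \<in> Pgr n"
  by (auto simp: act_def Pgr_def)

lemma ncoeff_act:
  assumes s: "s permutes {..<n}" and S: "S \<subseteq> {..<n}"
  shows "ncoeff n (s ` S) (act a s n p) = (\<Prod>i\<in>s ` S. a i) * inversion_sign s S * (ncoeff n S p :: 'f::field)"
proof -
  have sS: "s ` S \<subseteq> {..<n}" using S permutes_image[OF s] by auto
  have "ncoeff n (s ` S) (act a s n p)
      = (\<Sum>q | q permutes {..<n}. mono_sign n (s ` S) (s \<circ> q) * ((\<Prod>i\<in>s ` S. a i) * p (S, q)))"
    unfolding ncoeff_def
    by (rule sum.reindex_bij_witness[where i="\<lambda>q. s \<circ> q" and j="\<lambda>p'. inv s \<circ> p'"])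
       (use s sS in \<open>auto simp: act_def mmonos_def permutes_compose permutes_inv permutes_inv_o o_assoc
          permutes_image_inv_image\<close>)
  also have "\<dots> = (\<Prod>i\<in>s ` S. a i) * inversion_sign s S * ncoeff n S p"
    by (simp add: ncoeff_def sum_distrib_left mono_sign_compose[OF s _ S] algebra_simps)
  finally show ?thesis .
qed

lemma image_permutes_subsets_card:
  assumes "s permutes {..<n}"
  shows "s ` S \<in> subsets_card n I \<longleftrightarrow> S \<in> subsets_card n I"
proof -
  have "card (s ` S) = card S"
    using permutes_inj_on[OF assms] by (simp add: card_image inj_on_subset[OF _ subset_UNIV])
  moreover have "s ` S \<subseteq> {..<n} \<longleftrightarrow> S \<subseteq> {..<n}"
    using assms by (metis permutes_image_inv_image(2) permutes_image permutes_inv image_mono)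
  ultimately show ?thesis by (simp add: subsets_card_def)
qed

lemma act_vanish:
  assumes s: "s permutes {..<n}"
  shows "act a s n ` vanish n (subsets_card n I) \<subseteq> (vanish n (subsets_card n I) :: 'f::field mpoly set)"
proof clarify
  fix p :: "'f mpoly" assume p: "p \<in> vanish n (subsets_card n I)"
  have "ncoeff n S' (act a s n p) = 0" if S': "S' \<in> subsets_card n I" for S'
  proof -
    define S where "S = inv s ` S'"
    have "S' = s ` S" by (simp add: S_def permutes_image_inv_image[OF s])
    moreover from this have S: "S \<in> subsets_card n I"
      using S' image_permutes_subsets_card[OF s, of S I] by simp
    moreover have "ncoeff n S p = 0" using p S by (simp add: vanish_def)
    ultimately show ?thesis using ncoeff_act[OF s, of S a p] by (simp add: subsets_card_def)
  qed
  then show "act a s n p \<in> vanish n (subsets_card n I)" by (simp add: vanish_def act_Pgr)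
qed

lemma act_signed_sum:
  assumes s: "s permutes {..<n}" and S: "S \<subseteq> {..<n}"
  shows "act a s n (signed_sum n S) =
    pscale ((\<Prod>i\<in>s ` S. a i) * inversion_sign s S) (signed_sum n (s ` S) :: 'f::field mpoly)"
proof (rule ext, clarify)
  fix S' p'
  show "act a s n (signed_sum n S) (S', p') = pscale ((\<Prod>i\<in>s ` S. a i) * inversion_sign s S) (signed_sum n (s ` S)) (S', p')"
  proof (cases "(S', p') \<in> mmonos n \<and> S' = s ` S")
    case True
    then have p': "p' permutes {..<n}" and S': "S' = s ` S" by (auto simp: mmonos_def)
    have "mono_sign n (s ` S) p' = mono_sign n (s ` S) (s \<circ> (inv s \<circ> p'))"
      using permutes_inv_o(1)[OF s] by (simp add: o_assoc)
    also have "\<dots> = mono_sign n S (inv s \<circ> p') * (inversion_sign s S :: 'f)"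
      using s p' S by (intro mono_sign_compose) (auto intro: permutes_compose permutes_inv)
    finally have "mono_sign n S (inv s \<circ> p') = inversion_sign s S * (mono_sign n (s ` S) p' :: 'f)"
      using inversion_sign_squared[of s S, where 'f='f] by (simp add: algebra_simps)
    moreover have "act a s n (signed_sum n S) (S', p') = (\<Prod>i\<in>s ` S. a i) * mono_sign n S (inv s \<circ> p')"
      using True S' s p' by (simp add: act_def signed_sum_def permutes_image_inv_image permutes_compose permutes_inv)
    ultimately show ?thesis
      using S' p' by (simp add: pscale_def signed_sum_def)
  next
    case False
    have "s ` S \<subseteq> {..<n}" using S permutes_image[OF s] by (metis image_mono)
    moreover have "inv s ` S' \<noteq> S" if "S' \<noteq> s ` S"
      using that permutes_image_inv_image(1)[OF s] by metis
    ultimately show ?thesis using False by (auto simp: act_def signed_sum_def pscale_def mmonos_def)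
  qed
qed

lemma representation_act_signed_sum:
  assumes X: "pv.independent X" "signed_sum n (s ` S) \<in> X"
    and s: "s permutes {..<n}" and S: "S \<subseteq> {..<n}"
  shows "pv.representation X (act a s n (signed_sum n S)) (signed_sum n S)
    = (if s ` S = S then (\<Prod>i\<in>S. a i) * inversion_sign s S else (0::'f::field_char_0))"
proof -
  have "pv.representation X (act a s n (signed_sum n S)) (signed_sum n S)
      = (\<Prod>i\<in>s ` S. a i) * inversion_sign s S * pv.representation X (signed_sum n (s ` S)) (signed_sum n S)"
    using X by (simp add: act_signed_sum[OF s S] pv.representation_scale pv.span_base)
  also have "\<dots> = (\<Prod>i\<in>s ` S. a i) * inversion_sign s S * (if S = s ` S then 1 else 0)"
    using X inj_signed_sum[of n, where 'f='f] by (simp add: pv.representation_basis inj_eq)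
  finally show ?thesis by auto
qed

text \<open>Extending a basis of the smaller space by the signed sums of Z' - Z, the action permutes
  these up to scalars, so only the sets fixed by s contribute to the trace.\<close>
lemma trace_vanish_diff:
  fixes a :: "nat \<Rightarrow> 'f::field_char_0"
  assumes s: "s permutes {..<n}" and "I \<subseteq> I'"
  defines "Z \<equiv> subsets_card n I" and "Z' \<equiv> subsets_card n I'"
  shows "trace_on (vanish n Z) (act a s n) = trace_on (vanish n Z') (act a s n)
     + (\<Sum>S | S \<in> subsets_card n (I' - I) \<and> s ` S = S. (\<Prod>i\<in>S. a i) * inversion_sign s S)"
proof -
  have Z: "Z \<subseteq> Z'" "Z' \<subseteq> Pow {..<n}"
    using assms(2) by (auto simp: Z_def Z'_def subsets_card_def)
  then have finD: "finite (Z' - Z)" by (auto intro: finite_subset)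
  obtain B :: "'f mpoly set" where B: "B \<subseteq> vanish n Z'" "pv.independent B" "pv.span B = vanish n Z'" "finite B"
    by (rule basis_vanish_exists)
  define C where "C = (signed_sum n ` (Z' - Z) :: 'f mpoly set)"
  have BC: "pv.independent (B \<union> C)" "pv.span (B \<union> C) = vanish n Z" "B \<inter> C = {}" "finite C"
    using independent_Un_signed_sums[OF B(1,2) finD] span_Un_signed_sums[OF Z B(3)] finD B(1)
      signed_sum_notin_vanish[of _ Z' n]
    by (auto simp: C_def)
  have T: "module_hom pscale pscale (act a s n)" "act a s n ` vanish n Z \<subseteq> vanish n Z"
    "act a s n ` vanish n Z' \<subseteq> vanish n Z'"
    unfolding Z_def Z'_def by (rule act_module_hom act_vanish[OF s])+
  have sub: "vanish n Z \<subseteq> Pgr n" "vanish n Z' \<subseteq> Pgr n" by (auto simp: vanish_def)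
  have "trace_on (vanish n Z) (act a s n) = (\<Sum>v\<in>B \<union> C. pv.representation (B \<union> C) (act a s n v) v)"
    by (rule trace_on_eq_basis[OF BC(1,2) sub(1) T(1,2)])
  also have "\<dots> = (\<Sum>v\<in>B. pv.representation B (act a s n v) v)
      + (\<Sum>v\<in>C. pv.representation (B \<union> C) (act a s n v) v)"
    using BC B T(3) by (intro pv.trace_basis_Un) auto
  also have "(\<Sum>v\<in>B. pv.representation B (act a s n v) v) = trace_on (vanish n Z') (act a s n)"
    by (rule trace_on_eq_basis[OF B(2,3) sub(2) T(1,3), symmetric])
  also have "(\<Sum>v\<in>C. pv.representation (B \<union> C) (act a s n v) v)
      = (\<Sum>S\<in>Z' - Z. if s ` S = S then (\<Prod>i\<in>S. a i) * inversion_sign s S else 0)"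
  proof -
    have "s ` S \<in> Z' - Z" if "S \<in> Z' - Z" for S
      using that image_permutes_subsets_card[OF s] by (simp add: Z_def Z'_def)
    then show ?thesis
      unfolding C_def using BC(1) Z(2)
      by (subst sum.reindex[OF inj_on_subset[OF inj_signed_sum subset_UNIV]])
         (auto intro!: sum.cong representation_act_signed_sum[OF _ _ s] simp: C_def)
  qed
  also have "\<dots> = (\<Sum>S | S \<in> subsets_card n (I' - I) \<and> s ` S = S. (\<Prod>i\<in>S. a i) * inversion_sign s S)"
    using finD by (simp add: sum.inter_filter Z_def Z'_def subsets_card_diff)
  finally show ?thesis .
qed

lemma sum_subsets_card_by_card:
  assumes "finite I"
  shows "(\<Sum>S | S \<in> subsets_card n I \<and> P S. f S)
    = (\<Sum>i\<in>I. \<Sum>S | S \<subseteq> {..<n} \<and> card S = i \<and> P S. f S)"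
proof -
  have "{S. S \<in> subsets_card n I \<and> P S} = (\<Union>i\<in>I. {S. S \<subseteq> {..<n} \<and> card S = i \<and> P S})"
    by (auto simp: subsets_card_def)
  then show ?thesis
    using assms by (simp only:) (rule sum.UNION_disjoint, auto intro: finite_subset[of _ "Pow {..<n}"])
qed

lemma card_subsets_card: "finite I \<Longrightarrow> card (subsets_card n I) = (\<Sum>i\<in>I. n choose i)"
  using sum_subsets_card_by_card[where P="\<lambda>_. True" and f="\<lambda>_. 1::nat" and n=n] n_subsets[of "{..<n}"]
  by (simp add: subsets_card_def)

lemma qdim_vanish:
  assumes "I \<subseteq> I'" "finite (I' - I)"
  shows "qdim (vanish n (subsets_card n I) :: 'f::field_char_0 mpoly set) (vanish n (subsets_card n I'))
    = (\<Sum>i\<in>I' - I. n choose i)"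
  using dim_vanish[OF subsets_card_mono[OF assms(1)] subsets_card_Pow, of n, where 'f='f]
    card_subsets_card[OF assms(2)]
  by (simp add: qdim_def subsets_card_diff)

lemma qchar_vanish:
  fixes a :: "nat \<Rightarrow> 'f::field_char_0"
  assumes "I \<subseteq> I'" "finite (I' - I)" "s permutes {..<n}"
  shows "qchar n (vanish n (subsets_card n I)) (vanish n (subsets_card n I')) a s
    = (\<Sum>i\<in>I' - I. chi_row_col n i a s)"
proof -
  have "qchar n (vanish n (subsets_card n I)) (vanish n (subsets_card n I')) a s
      = (\<Sum>i\<in>I' - I. \<Sum>S | S \<subseteq> {..<n} \<and> card S = i \<and> s ` S = S. (\<Prod>i\<in>S. a i) * inversion_sign s S)"
    using trace_vanish_diff[OF assms(3,1), of a] sum_subsets_card_by_card[OF assms(2)]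
    by (simp add: qchar_def)
  also have "\<dots> = (\<Sum>i\<in>I' - I. chi_row_col n i a s)"
    unfolding chi_row_col_def
    using inversion_sign_eq_sign_on[OF assms(3)] by (intro sum.cong refl) auto
  finally show ?thesis .
qed

lemma Pgr_eq_vanish: "Pgr n = vanish n (subsets_card n {})"
  by (simp add: vanish_def subsets_card_def)

lemma CPG_eq: "CPG TYPE('f::field_char_0) t n = vanish n (subsets_card n {i. odd i \<and> i < t})"
  by (simp add: CPG_def CP_grass_eq)

lemma IdPG_eq: "IdPG TYPE('f::field) t n = vanish n (subsets_card n {..t})"
  by (simp add: IdPG_def IdP_grass_eq)

lemma cgrz_grassmann: "cgrz TYPE('f::field_char_0) t n = (\<Sum>i | odd i \<and> i < t. n choose i)"
  by (simp add: cgrz_def CPG_eq Pgr_eq_vanish qdim_vanish)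

lemma deltagr_grassmann:
  "deltagr TYPE('f::field_char_0) t n = (\<Sum>i\<in>{..t} - {i. odd i \<and> i < t}. n choose i)"
  unfolding deltagr_def CPG_eq IdPG_eq by (rule qdim_vanish) auto

lemma chigrz_grassmann:
  fixes a :: "nat \<Rightarrow> 'f::field_char_0"
  assumes "s permutes {..<n}"
  shows "chigrz t n a s = (\<Sum>i | odd i \<and> i < t. chi_row_col n i a s)"
  unfolding chigrz_def CPG_eq Pgr_eq_vanish using assms by (subst qchar_vanish) simp_all

lemma chiDelta_grassmann:
  fixes a :: "nat \<Rightarrow> 'f::field_char_0"
  assumes "s permutes {..<n}"
  shows "chiDelta t n a s = (\<Sum>i\<in>{..t} - {i. odd i \<and> i < t}. chi_row_col n i a s)"
  unfolding chiDelta_def CPG_eq IdPG_eq using assms by (intro qchar_vanish) auto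

theorem theorem5p4:
  fixes k n :: nat
  assumes "k \<ge> 1" and "n \<ge> 1"
  shows
    "cgrz TYPE('f::field_char_0) (2*k) n = (\<Sum>i | 1 \<le> i \<and> i \<le> 2*k \<and> odd i. n choose i)
     \<and> cgrz TYPE('f) (2*k+1) n = (\<Sum>i | 1 \<le> i \<and> i \<le> 2*k \<and> odd i. n choose i)
     \<and> deltagr TYPE('f) (2*k) n = (\<Sum>i | i \<le> 2*k \<and> even i. n choose i)
     \<and> deltagr TYPE('f) (2*k+1) n = (n choose (2*k+1)) + deltagr TYPE('f) (2*k) n
     \<and> (\<forall>(a :: nat \<Rightarrow> 'f) sigma. (\<forall>j<n. a j = 1 \<or> a j = -1) \<longrightarrow> sigma permutes {..<n} \<longrightarrow>
          chigrz (2*k) n a sigma = (\<Sum>i | 1 \<le> i \<and> i \<le> 2*k \<and> odd i. chi_row_col n i a sigma)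
        \<and> chigrz (2*k+1) n a sigma = (\<Sum>i | 1 \<le> i \<and> i \<le> 2*k \<and> odd i. chi_row_col n i a sigma)
        \<and> chiDelta (2*k) n a sigma = (\<Sum>i | i \<le> 2*k \<and> even i. chi_row_col n i a sigma)
        \<and> chiDelta (2*k+1) n a sigma
            = chi_row_col n (2*k+1) a sigma + (\<Sum>i | i \<le> 2*k \<and> even i. chi_row_col n i a sigma))"
proof -
  let ?odd = "{i. 1 \<le> i \<and> i \<le> 2*k \<and> odd i}" and ?even = "{i. i \<le> 2*k \<and> even i}"
  have odd_parts: "{i. odd i \<and> i < 2*k} = ?odd" "{i. odd i \<and> i < 2*k+1} = ?odd"
    by (auto simp: Suc_le_eq odd_pos) presburger
  have even_parts: "{..2*k} - ?odd = ?even" "{..2*k+1} - ?odd = insert (2*k+1) ?even"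
    by (auto simp: Suc_le_eq odd_pos)
  have "finite ?even" "2*k+1 \<notin> ?even" by auto
  then show ?thesis
    using cgrz_grassmann[of "2*k" n, where 'f='f] cgrz_grassmann[of "2*k+1" n, where 'f='f]
      deltagr_grassmann[of "2*k" n, where 'f='f] deltagr_grassmann[of "2*k+1" n, where 'f='f]
      chigrz_grassmann[of _ n "2*k", where 'f='f] chigrz_grassmann[of _ n "2*k+1", where 'f='f]
      chiDelta_grassmann[of _ n "2*k", where 'f='f] chiDelta_grassmann[of _ n "2*k+1", where 'f='f]
    by (simp only: odd_parts even_parts sum.insert) simp
qed

end
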